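(* Let $k$ be algebraically closed of characteristic $0$, let $\mathcal A$ be a $k$-conformal superalgebra and $\sigma$ an automorphism of $\mathcal A$ with $\sigma^m=\mathrm{id}$ for some $m\ge1$. Then the twisted loop algebra $\mathcal L(\mathcal A,\sigma)$ is an $\mathcal S_m/\mathcal R$-form of $\mathcal A\otimes_k\mathcal R$; that is, $\mathcal L(\mathcal A,\sigma)\otimes_{\mathcal R}\mathcal S_m\cong(\mathcal A\otimes_k\mathcal R)\otimes_{\mathcal R}\mathcal S_m$ as $\mathcal S_m$-conformal superalgebras.
   Context: Conventions: a differential $k$-ring is $(R,\delta_R)$ with $R$ a commutative unital $k$-algebra and $\delta_R$ a $k$-linear derivation; extensions are morphisms of such pairs commuting with derivations. An $\mathcal R$-conformal superalgebra is a $\mathbb Z/2\mathbb Z$-graded $R$-module $\mathcal A$ with a parity-preserving $k$-linear $\partial_{\mathcal A}$ and $k$-bilinear $n$-products $a_{(n)}b$ ($n\in\mathbb Z_+$) satisfying: $a_{(n)}b=0$ for $n\gg0$; $(\partial_{\mathcal A}a)_{(n)}b=-na_{(n-1)}b$, $a_{(n)}\partial_{\mathcal A}b=\partial_{\mathcal A}(a_{(n)}b)+na_{(n-1)}b$; $\partial_{\mathcal A}(ra)=r\partial_{\mathcal A}a+\delta_R(r)a$; $a_{(n)}(rb)=r(a_{(n)}b)$, $(ra)_{(n)}b=\sum_{j\ge0}\frac{1}{j!}\delta_R^{j}(r)(a_{(n+j)}b)$. Homomorphisms are even $R$-linear maps preserving $n$-products and commuting with $\partial$. A $k$-conformal superalgebra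 is one over $(k,0)$. Base change to an extension $\mathcal S=(S,\delta_S)$: $\mathcal A\otimes_{\mathcal R}\mathcal S$ is $\mathcal A\otimes_RS$ with $\partial=\partial_{\mathcal A}\otimes1+1\otimes\delta_S$ and $(a\otimes r)_{(n)}(b\otimes s)=\sum_j(a_{(n+j)}b)\otimes\frac1{j!}\delta_S^j(r)s$. For an $\mathcal R$-conformal superalgebra $\mathcal A$ and extension $\mathcal S$, an $\mathcal S/\mathcal R$-form of $\mathcal A$ is an $\mathcal R$-conformal superalgebra $\mathcal F$ with $\mathcal F\otimes_{\mathcal R}\mathcal S\cong\mathcal A\otimes_{\mathcal R}\mathcal S$ as $\mathcal S$-conformal superalgebras. Notation: $R=k[t,t^{-1}]$, $S_m=k[t^{1/m},t^{-1/m}]$, $\delta_t=d/dt$, $\mathcal R=(R,\delta_t)$, $\mathcal S_m=(S_m,\delta_t)$; $\mathcal A\otimes_k\mathcal R$ is the base change of $\mathcal A$ from $(k,0)$ to $\mathcal R$. Fix compatible primitive roots of unity $\xi_m\in k$ ($\xi_{\ell m}^\ell=\xi_m$). For $\sigma$ of period $m$ set $\mathcal A_i=\{x\in\mathcal A:\sigma(x)=\xi_m^ix\}$ and $\mathcal L(\mathcal A,\sigma)=\bigoplus_{i\in\mathbb Z}\mathcal A_i\otimes t^{i/m}\subseteq\mathcal A\otimes_k\mathcal S_m$; it is stable under $\partial_{\mathcal A}\otimes1+1\otimes\delta_t$, under all $n$-products of $\mathcal A\otimes_k\mathcal S_m$ and under multiplication by $R$, hence is an $\mathcal R$-conformal superalgebra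 (the twisted loop algebra). *)

theory Defs
  imports Complex_Main "HOL-Library.Poly_Mapping" "HOL-Computational_Algebra.Polynomial"
begin

record ('k, 'r) dring =
  dr_emb :: "'k \<Rightarrow> 'r"
  dr_delta :: "'r \<Rightarrow> 'r"

definition diff_kring :: "('k::field, 'r::comm_ring_1) dring \<Rightarrow> bool" where
  "diff_kring D \<longleftrightarrow>
     dr_emb D 0 = 0 \<and> dr_emb D 1 = 1 \<and>
     (\<forall>x y. dr_emb D (x + y) = dr_emb D x + dr_emb D y) \<and>
     (\<forall>x y. dr_emb D (x * y) = dr_emb D x * dr_emb D y) \<and>
     (\<forall>r s. dr_delta D (r + s) = dr_delta D r + dr_delta D s) \<and>
     (\<forall>r s. dr_delta D (r * s) = r * dr_delta D s + dr_delta D r * s) \<and>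
     (\<forall>c r. dr_delta D (dr_emb D c * r) = dr_emb D c * dr_delta D r)"

definition dring_ext :: "('k::field, 'r::comm_ring_1) dring \<Rightarrow> ('k, 's::comm_ring_1) dring
    \<Rightarrow> ('r \<Rightarrow> 's) \<Rightarrow> bool" where
  "dring_ext D1 D2 \<iota> \<longleftrightarrow> diff_kring D1 \<and> diff_kring D2 \<and>
     \<iota> 1 = 1 \<and> (\<forall>x y. \<iota> (x + y) = \<iota> x + \<iota> y) \<and> (\<forall>x y. \<iota> (x * y) = \<iota> x * \<iota> y) \<and>
     (\<forall>c. \<iota> (dr_emb D1 c) = dr_emb D2 c) \<and>
     (\<forall>r. \<iota> (dr_delta D1 r) = dr_delta D2 (\<iota> r))"

text \<open>The underlying abelian group structure is that of the type 'a (class ab_group_add);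
  the module itself is the subgroup cs_carrier.\<close>

record ('r, 'a) csa =
  cs_carrier :: "'a set"
  cs_even :: "'a set"
  cs_odd :: "'a set"
  cs_smult :: "'r \<Rightarrow> 'a \<Rightarrow> 'a"
  cs_der :: "'a \<Rightarrow> 'a"
  cs_nprod :: "nat \<Rightarrow> 'a \<Rightarrow> 'a \<Rightarrow> 'a"

definition subgroup_of :: "'a::ab_group_add set \<Rightarrow> bool" where
  "subgroup_of X \<longleftrightarrow> 0 \<in> X \<and> (\<forall>x\<in>X. \<forall>y\<in>X. x + y \<in> X) \<and> (\<forall>x\<in>X. - x \<in> X)"

definition graded_module :: "('r::comm_ring_1, 'a::ab_group_add, 'z) csa_scheme \<Rightarrow> bool" where
  "graded_module M \<longleftrightarrow>
     subgroup_of (cs_carrier M) \<and> subgroup_of (cs_even M) \<and> subgroup_of (cs_odd M) \<and>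
     cs_even M \<subseteq> cs_carrier M \<and> cs_odd M \<subseteq> cs_carrier M \<and>
     cs_carrier M = {x + y | x y. x \<in> cs_even M \<and> y \<in> cs_odd M} \<and>
     cs_even M \<inter> cs_odd M = {0} \<and>
     (\<forall>r. \<forall>x\<in>cs_carrier M. cs_smult M r x \<in> cs_carrier M) \<and>
     (\<forall>r. \<forall>x\<in>cs_even M. cs_smult M r x \<in> cs_even M) \<and>
     (\<forall>r. \<forall>x\<in>cs_odd M. cs_smult M r x \<in> cs_odd M) \<and>
     (\<forall>r. \<forall>x\<in>cs_carrier M. \<forall>y\<in>cs_carrier M.
        cs_smult M r (x + y) = cs_smult M r x + cs_smult M r y) \<and>
     (\<forall>r s. \<forall>x\<in>cs_carrier M. cs_smult M (r + s) x = cs_smult M r x + cs_smult M s x) \<and>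
     (\<forall>r s. \<forall>x\<in>cs_carrier M. cs_smult M (r * s) x = cs_smult M r (cs_smult M s x)) \<and>
     (\<forall>x\<in>cs_carrier M. cs_smult M 1 x = x)"

text \<open>The sum over j in the last axiom is finite: it is taken over j < N for any N beyond
  which the products a_(n+j) b vanish (all such N give the same value).\<close>

definition conformal_superalgebra ::
    "('k::field, 'r::comm_ring_1) dring \<Rightarrow> ('r, 'a::ab_group_add, 'z) csa_scheme \<Rightarrow> bool" where
  "conformal_superalgebra D A \<longleftrightarrow>
     diff_kring D \<and> graded_module A \<and>
     (\<forall>a\<in>cs_carrier A. cs_der A a \<in> cs_carrier A) \<and>
     (\<forall>a\<in>cs_even A. cs_der A a \<in> cs_even A) \<and>
     (\<forall>a\<in>cs_odd A. cs_der A a \<in> cs_odd A) \<and>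
     (\<forall>c. \<forall>a\<in>cs_carrier A. \<forall>b\<in>cs_carrier A.
        cs_der A (cs_smult A (dr_emb D c) a + b)
          = cs_smult A (dr_emb D c) (cs_der A a) + cs_der A b) \<and>
     (\<forall>n. \<forall>a\<in>cs_carrier A. \<forall>b\<in>cs_carrier A. cs_nprod A n a b \<in> cs_carrier A) \<and>
     (\<forall>n c. \<forall>a\<in>cs_carrier A. \<forall>a'\<in>cs_carrier A. \<forall>b\<in>cs_carrier A.
        cs_nprod A n (cs_smult A (dr_emb D c) a + a') b
          = cs_smult A (dr_emb D c) (cs_nprod A n a b) + cs_nprod A n a' b) \<and>
     (\<forall>n c. \<forall>a\<in>cs_carrier A. \<forall>b\<in>cs_carrier A. \<forall>b'\<in>cs_carrier A.
        cs_nprod A n a (cs_smult A (dr_emb D c) b + b')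
          = cs_smult A (dr_emb D c) (cs_nprod A n a b) + cs_nprod A n a b') \<and>
     (\<forall>a\<in>cs_carrier A. \<forall>b\<in>cs_carrier A. \<exists>N. \<forall>n\<ge>N. cs_nprod A n a b = 0) \<and>
     (\<forall>n. \<forall>a\<in>cs_carrier A. \<forall>b\<in>cs_carrier A.
        cs_nprod A n (cs_der A a) b = - cs_smult A (of_nat n) (cs_nprod A (n - 1) a b)) \<and>
     (\<forall>n. \<forall>a\<in>cs_carrier A. \<forall>b\<in>cs_carrier A.
        cs_nprod A n a (cs_der A b)
          = cs_der A (cs_nprod A n a b) + cs_smult A (of_nat n) (cs_nprod A (n - 1) a b)) \<and>
     (\<forall>r. \<forall>a\<in>cs_carrier A.
        cs_der A (cs_smult A r a) = cs_smult A r (cs_der A a) + cs_smult A (dr_delta D r) a) \<and>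
     (\<forall>n r. \<forall>a\<in>cs_carrier A. \<forall>b\<in>cs_carrier A.
        cs_nprod A n a (cs_smult A r b) = cs_smult A r (cs_nprod A n a b)) \<and>
     (\<forall>n r N. \<forall>a\<in>cs_carrier A. \<forall>b\<in>cs_carrier A.
        (\<forall>j\<ge>N. cs_nprod A (n + j) a b = 0) \<longrightarrow>
        cs_nprod A n (cs_smult A r a) b
          = (\<Sum>j<N. cs_smult A (dr_emb D (inverse (of_nat (fact j))) * (dr_delta D ^^ j) r)
                                (cs_nprod A (n + j) a b)))"

definition csa_hom ::
    "('r::comm_ring_1, 'a::ab_group_add, 'z1) csa_scheme \<Rightarrow> ('r, 'b::ab_group_add, 'z2) csa_scheme
     \<Rightarrow> ('a \<Rightarrow> 'b) \<Rightarrow> bool" where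
  "csa_hom A B \<phi> \<longleftrightarrow>
     \<phi> ` cs_carrier A \<subseteq> cs_carrier B \<and> \<phi> ` cs_even A \<subseteq> cs_even B \<and>
     \<phi> ` cs_odd A \<subseteq> cs_odd B \<and>
     (\<forall>x\<in>cs_carrier A. \<forall>y\<in>cs_carrier A. \<phi> (x + y) = \<phi> x + \<phi> y) \<and>
     (\<forall>r. \<forall>x\<in>cs_carrier A. \<phi> (cs_smult A r x) = cs_smult B r (\<phi> x)) \<and>
     (\<forall>x\<in>cs_carrier A. \<phi> (cs_der A x) = cs_der B (\<phi> x)) \<and>
     (\<forall>n. \<forall>x\<in>cs_carrier A. \<forall>y\<in>cs_carrier A.
        \<phi> (cs_nprod A n x y) = cs_nprod B n (\<phi> x) (\<phi> y))"

definition csa_iso ::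
    "('r::comm_ring_1, 'a::ab_group_add, 'z1) csa_scheme \<Rightarrow> ('r, 'b::ab_group_add, 'z2) csa_scheme
     \<Rightarrow> ('a \<Rightarrow> 'b) \<Rightarrow> bool" where
  "csa_iso A B \<phi> \<longleftrightarrow> csa_hom A B \<phi> \<and> bij_betw \<phi> (cs_carrier A) (cs_carrier B)"

definition csa_isomorphic ::
    "('r::comm_ring_1, 'a::ab_group_add, 'z1) csa_scheme \<Rightarrow> ('r, 'b::ab_group_add, 'z2) csa_scheme
     \<Rightarrow> bool" where
  "csa_isomorphic A B \<longleftrightarrow> (\<exists>\<phi>. csa_iso A B \<phi>)"

text \<open>Formal finite Z-linear combinations of symbols a \<otimes> s, and the subgroup of relations
  defining the tensor product F \<otimes>_R S along iota : R -> S.\<close>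

inductive_set tens_rel ::
    "('r::comm_ring_1, 'f::ab_group_add, 'z) csa_scheme \<Rightarrow> ('r \<Rightarrow> 's::comm_ring_1)
     \<Rightarrow> ('f \<times> 's \<Rightarrow>\<^sub>0 int) set"
  for F \<iota> where
  rel_zero: "0 \<in> tens_rel F \<iota>"
| rel_add: "x \<in> tens_rel F \<iota> \<Longrightarrow> y \<in> tens_rel F \<iota> \<Longrightarrow> x + y \<in> tens_rel F \<iota>"
| rel_neg: "x \<in> tens_rel F \<iota> \<Longrightarrow> - x \<in> tens_rel F \<iota>"
| rel_addl: "a \<in> cs_carrier F \<Longrightarrow> a' \<in> cs_carrier F \<Longrightarrow>
     Poly_Mapping.single (a + a', s) 1 - Poly_Mapping.single (a, s) 1 - Poly_Mapping.single (a', s) 1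
       \<in> tens_rel F \<iota>"
| rel_addr: "a \<in> cs_carrier F \<Longrightarrow>
     Poly_Mapping.single (a, s + s') 1 - Poly_Mapping.single (a, s) 1 - Poly_Mapping.single (a, s') 1
       \<in> tens_rel F \<iota>"
| rel_bal: "a \<in> cs_carrier F \<Longrightarrow>
     Poly_Mapping.single (cs_smult F r a, s) 1 - Poly_Mapping.single (a, \<iota> r * s) 1
       \<in> tens_rel F \<iota>"

definition tens_eval ::
    "('s::comm_ring_1, 't::ab_group_add, 'z) csa_scheme \<Rightarrow> ('f \<Rightarrow> 's \<Rightarrow> 't)
     \<Rightarrow> ('f \<times> 's \<Rightarrow>\<^sub>0 int) \<Rightarrow> 't" where
  "tens_eval T \<beta> x =
     (\<Sum>p\<in>Poly_Mapping.keys x. cs_smult T (of_int (Poly_Mapping.lookup x p)) (\<beta> (fst p) (snd p)))"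

definition supported_in :: "('f \<times> 's \<Rightarrow>\<^sub>0 int) \<Rightarrow> 'f set \<Rightarrow> bool" where
  "supported_in x X \<longleftrightarrow> fst ` Poly_Mapping.keys x \<subseteq> X"

text \<open>(T, beta) is the base change F \<otimes>_R S of the R-conformal superalgebra F along the
  extension iota : (R, delta_R) -> (S, delta_S): T is an S-conformal superalgebra, beta(a,s)
  plays the role of a \<otimes> s, T is exactly the quotient of the formal combinations by the
  tensor relations (so T = F \<otimes>_R S as abelian groups), S acts on the right factor, the
  grading is induced from F, and the derivation and n-products are the base-change ones.\<close>

definition is_base_change ::
    "('k::field, 'r::comm_ring_1) dring \<Rightarrow> ('k, 's::comm_ring_1) dring \<Rightarrow> ('r \<Rightarrow> 's)
     \<Rightarrow> ('r, 'f::ab_group_add, 'z1) csa_scheme \<Rightarrow> ('s, 't::ab_group_add, 'z2) csa_scheme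
     \<Rightarrow> ('f \<Rightarrow> 's \<Rightarrow> 't) \<Rightarrow> bool" where
  "is_base_change D1 D2 \<iota> F T \<beta> \<longleftrightarrow>
     dring_ext D1 D2 \<iota> \<and> conformal_superalgebra D2 T \<and>
     (\<forall>a\<in>cs_carrier F. \<forall>s. \<beta> a s \<in> cs_carrier T) \<and>
     (\<forall>a\<in>cs_carrier F. \<forall>a'\<in>cs_carrier F. \<forall>s. \<beta> (a + a') s = \<beta> a s + \<beta> a' s) \<and>
     (\<forall>a\<in>cs_carrier F. \<forall>s s'. \<beta> a (s + s') = \<beta> a s + \<beta> a s') \<and>
     (\<forall>a\<in>cs_carrier F. \<forall>r s. \<beta> (cs_smult F r a) s = \<beta> a (\<iota> r * s)) \<and>
     (\<forall>a\<in>cs_carrier F. \<forall>s s'. cs_smult T s' (\<beta> a s) = \<beta> a (s' * s)) \<and>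
     cs_carrier T = {tens_eval T \<beta> x | x. supported_in x (cs_carrier F)} \<and>
     cs_even T = {tens_eval T \<beta> x | x. supported_in x (cs_even F)} \<and>
     cs_odd T = {tens_eval T \<beta> x | x. supported_in x (cs_odd F)} \<and>
     (\<forall>x. supported_in x (cs_carrier F) \<longrightarrow> tens_eval T \<beta> x = 0 \<longrightarrow> x \<in> tens_rel F \<iota>) \<and>
     (\<forall>a\<in>cs_carrier F. \<forall>s. cs_der T (\<beta> a s) = \<beta> (cs_der F a) s + \<beta> a (dr_delta D2 s)) \<and>
     (\<forall>n N r s. \<forall>a\<in>cs_carrier F. \<forall>b\<in>cs_carrier F.
        (\<forall>j\<ge>N. cs_nprod F (n + j) a b = 0) \<longrightarrow>
        cs_nprod T n (\<beta> a r) (\<beta> b s)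
          = (\<Sum>j<N. \<beta> (cs_nprod F (n + j) a b)
                        (dr_emb D2 (inverse (of_nat (fact j))) * (dr_delta D2 ^^ j) r * s)))"

definition kring :: "('k::field, 'k) dring" where
  "kring = \<lparr>dr_emb = (\<lambda>c. c), dr_delta = (\<lambda>_. 0)\<rparr>"

text \<open>R = k[t, t^-1] is modelled as the group algebra k[Z] (finitely supported int => k),
  the key j standing for t^j; delta_t = d/dt.\<close>

definition laurent_deriv :: "(int \<Rightarrow>\<^sub>0 'k::field) \<Rightarrow> (int \<Rightarrow>\<^sub>0 'k)" where
  "laurent_deriv f = (\<Sum>j\<in>Poly_Mapping.keys f.
      Poly_Mapping.single (j - 1) (of_int j * Poly_Mapping.lookup f j))"

definition Rring :: "('k::field, int \<Rightarrow>\<^sub>0 'k) dring" where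
  "Rring = \<lparr>dr_emb = (\<lambda>c. Poly_Mapping.single 0 c), dr_delta = laurent_deriv\<rparr>"

text \<open>S_m = k[t^(1/m), t^(-1/m)] is modelled as k[Z], the key i standing for t^(i/m);
  delta_t(t^(i/m)) = (i/m) t^((i-m)/m).\<close>

definition puiseux_deriv :: "nat \<Rightarrow> (int \<Rightarrow>\<^sub>0 'k::field_char_0) \<Rightarrow> (int \<Rightarrow>\<^sub>0 'k)" where
  "puiseux_deriv m f = (\<Sum>i\<in>Poly_Mapping.keys f.
      Poly_Mapping.single (i - int m) (of_int i / of_nat m * Poly_Mapping.lookup f i))"

definition Sring :: "nat \<Rightarrow> ('k::field_char_0, int \<Rightarrow>\<^sub>0 'k) dring" where
  "Sring m = \<lparr>dr_emb = (\<lambda>c. Poly_Mapping.single 0 c), dr_delta = puiseux_deriv m\<rparr>"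

text \<open>The inclusion R -> S_m, t^j |-> t^(mj/m).\<close>

definition incl_RS :: "nat \<Rightarrow> (int \<Rightarrow>\<^sub>0 'k::field) \<Rightarrow> (int \<Rightarrow>\<^sub>0 'k)" where
  "incl_RS m f = (\<Sum>j\<in>Poly_Mapping.keys f. Poly_Mapping.single (int m * j) (Poly_Mapping.lookup f j))"

definition const_laurent :: "'k::field \<Rightarrow> (int \<Rightarrow>\<^sub>0 'k)" where
  "const_laurent c = Poly_Mapping.single 0 c"

definition eigenspace ::
    "('k::field, 'a::ab_group_add, 'z) csa_scheme \<Rightarrow> ('a \<Rightarrow> 'a) \<Rightarrow> 'k \<Rightarrow> int \<Rightarrow> 'a set" where
  "eigenspace A \<sigma> \<xi> i = {x \<in> cs_carrier A. \<sigma> x = cs_smult A (\<xi> powi i) x}"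

text \<open>Given the base change (B, beta) = A \<otimes>_k S_m, the twisted loop algebra
  L(A, sigma) = sum_i A_i \<otimes> t^(i/m) inside B, viewed as an R-conformal superalgebra
  (R acting through the inclusion R -> S_m).\<close>

definition loop_carrier ::
    "('k::field, 'a::ab_group_add, 'z1) csa_scheme \<Rightarrow> ('a \<Rightarrow> 'a) \<Rightarrow> 'k
     \<Rightarrow> ('a \<Rightarrow> (int \<Rightarrow>\<^sub>0 'k) \<Rightarrow> 'b::ab_group_add) \<Rightarrow> 'b set" where
  "loop_carrier A \<sigma> \<xi> \<beta> =
     {\<Sum>i\<in>I. \<beta> (x i) (Poly_Mapping.single i 1) | I x.
        finite I \<and> (\<forall>i\<in>I. x i \<in> eigenspace A \<sigma> \<xi> i)}"

definition loop_algebra ::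
    "nat \<Rightarrow> ('k::field, 'a::ab_group_add, 'z1) csa_scheme \<Rightarrow> ('a \<Rightarrow> 'a) \<Rightarrow> 'k
     \<Rightarrow> (int \<Rightarrow>\<^sub>0 'k, 'b::ab_group_add, 'z2) csa_scheme \<Rightarrow> ('a \<Rightarrow> (int \<Rightarrow>\<^sub>0 'k) \<Rightarrow> 'b)
     \<Rightarrow> (int \<Rightarrow>\<^sub>0 'k, 'b) csa" where
  "loop_algebra m A \<sigma> \<xi> B \<beta> =
     \<lparr>cs_carrier = loop_carrier A \<sigma> \<xi> \<beta>,
      cs_even = loop_carrier A \<sigma> \<xi> \<beta> \<inter> cs_even B,
      cs_odd = loop_carrier A \<sigma> \<xi> \<beta> \<inter> cs_odd B,
      cs_smult = (\<lambda>r x. cs_smult B (incl_RS m r) x),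
      cs_der = cs_der B,
      cs_nprod = cs_nprod B\<rparr>"

end

theory Submission
  imports Defs
begin

text \<open>
  Write B = A \<otimes>_k S_m, C = A \<otimes>_k R, D = C \<otimes>_R S_m and
  E = L(A, sigma) \<otimes>_R S_m.  We show that both D and E are isomorphic to B as S_m-conformal
  superalgebras; composing one isomorphism with the inverse of the other gives E \<cong> D.

  The tool is the universal property of the base change F \<otimes>_R S, which is given here as the
  quotient of formal Z-combinations of symbols a \<otimes> s by the tensor relations: every map
  F \<times> S \<rightarrow> U that is biadditive and R-balanced descends to T = F \<otimes>_R S (tensor_lift).
  Applied to "a \<otimes> s \<mapsto> s \<cdot> g(a)" for a homomorphism g : F \<rightarrow> T' it yields the base change
  of g, a homomorphism of conformal superalgebras (locale base_change_hom).

  For D \<rightarrow> B this is (a \<otimes> r) \<otimes> s \<mapsto> a \<otimes> r s, with inverse a \<otimes> s \<mapsto> (a \<otimes> 1) \<otimes> s.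
  For E \<rightarrow> B it is v \<otimes> s \<mapsto> s v (L is a subalgebra of B); its inverse sends a \<otimes> s to
  \<Sum>_k (\<pi>_k a \<otimes> t^(k/m)) \<otimes> t^(-k/m) s, where \<pi>_k are the projections of A onto the
  eigenspaces of sigma.  These projections exist because m is invertible in k and \<xi>_m is a
  primitive m-th root of unity (finite Fourier analysis on Z/mZ).
\<close>

definition formal_eval ::
    "('f \<Rightarrow> 's::comm_ring_1 \<Rightarrow> 'u::ab_group_add) \<Rightarrow> 'f set \<Rightarrow> ('f \<times> 's \<Rightarrow>\<^sub>0 int) \<Rightarrow> 'u" where
  "formal_eval f C x = (\<Sum>p\<in>Poly_Mapping.keys x.
      if fst p \<in> C then f (fst p) (of_int (Poly_Mapping.lookup x p) * snd p) else 0)"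

definition right_additive :: "('f \<Rightarrow> 's::comm_ring_1 \<Rightarrow> 'u::ab_group_add) \<Rightarrow> 'f set \<Rightarrow> bool" where
  "right_additive f C \<longleftrightarrow> (\<forall>a\<in>C. \<forall>s s'. f a (s + s') = f a s + f a s')"

lemma right_additive_zero: "right_additive f C \<Longrightarrow> a \<in> C \<Longrightarrow> f a 0 = 0"
  unfolding right_additive_def by (metis add_0 add_cancel_right_right)

lemma formal_eval_superset:
  assumes "right_additive f C" "finite K" "Poly_Mapping.keys x \<subseteq> K"
  shows "formal_eval f C x
    = (\<Sum>p\<in>K. if fst p \<in> C then f (fst p) (of_int (Poly_Mapping.lookup x p) * snd p) else 0)"
  unfolding formal_eval_def
  by (rule sum.mono_neutral_left) (use assms in \<open>auto simp: in_keys_iff right_additive_zero\<close>)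

lemma formal_eval_add:
  assumes "right_additive f C"
  shows "formal_eval f C (x + y) = formal_eval f C x + formal_eval f C y"
proof -
  let ?K = "Poly_Mapping.keys x \<union> Poly_Mapping.keys y"
  let ?ev = "\<lambda>z p. if fst p \<in> C then f (fst p) (of_int (Poly_Mapping.lookup z p) * snd p) else 0"
  have "formal_eval f C (x + y) = (\<Sum>p\<in>?K. ?ev (x + y) p)"
    by (rule formal_eval_superset[OF assms]) (use keys_add[of x y] in auto)
  also have "\<dots> = (\<Sum>p\<in>?K. ?ev x p + ?ev y p)"
    using assms unfolding right_additive_def by (intro sum.cong) (auto simp: lookup_add distrib_right)
  also have "\<dots> = formal_eval f C x + formal_eval f C y"
    by (simp add: sum.distrib formal_eval_superset[OF assms, of ?K])
  finally show ?thesis .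
qed

lemma formal_eval_zero: "formal_eval f C 0 = 0"
  by (simp add: formal_eval_def)

lemma formal_eval_diff:
  assumes "right_additive f C"
  shows "formal_eval f C (x - y) = formal_eval f C x - formal_eval f C y"
  using formal_eval_add[OF assms, of "x - y" y] by (simp add: algebra_simps)

lemma formal_eval_single:
  "formal_eval f C (Poly_Mapping.single (a, s) 1) = (if a \<in> C then f a s else 0)"
  by (simp add: formal_eval_def)

lemma formal_eval_sum:
  assumes "right_additive f C"
  shows "formal_eval f C (\<Sum>i\<in>I. g i) = (\<Sum>i\<in>I. formal_eval f C (g i))"
  by (induction I rule: infinite_finite_induct) (auto simp: formal_eval_zero formal_eval_add[OF assms])

lemma supported_add: "supported_in x C \<Longrightarrow> supported_in y C \<Longrightarrow> supported_in (x + y) C"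
  unfolding supported_in_def using keys_add[of x y] by blast

lemma supported_diff: "supported_in x C \<Longrightarrow> supported_in y C \<Longrightarrow> supported_in (x - y) C"
  unfolding supported_in_def using keys_diff[of x y] by blast

lemma supported_single: "a \<in> C \<Longrightarrow> supported_in (Poly_Mapping.single (a, s) c) C"
  unfolding supported_in_def by auto

lemma supported_sum: "(\<And>i. i \<in> I \<Longrightarrow> supported_in (g i) C) \<Longrightarrow> supported_in (sum g I) C"
  by (induction I rule: infinite_finite_induct) (simp_all add: supported_add supported_in_def[of 0])

text \<open>A map F \<times> S \<rightarrow> U is balanced if it is biadditive and moves scalars of R from the
  left factor to the right factor along \<iota>; exactly such maps kill the tensor relations.\<close>

definition balanced_map :: "('r::comm_ring_1, 'f::ab_group_add, 'z) csa_scheme \<Rightarrow> ('r \<Rightarrow> 's::comm_ring_1)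
   \<Rightarrow> ('f \<Rightarrow> 's \<Rightarrow> 'u::ab_group_add) \<Rightarrow> bool" where
  "balanced_map F \<iota> f \<longleftrightarrow> right_additive f (cs_carrier F) \<and>
     (\<forall>a\<in>cs_carrier F. \<forall>a'\<in>cs_carrier F. \<forall>s. f (a + a') s = f a s + f a' s) \<and>
     (\<forall>a\<in>cs_carrier F. \<forall>r s. f (cs_smult F r a) s = f a (\<iota> r * s))"

definition module_closed :: "('r::comm_ring_1, 'f::ab_group_add, 'z) csa_scheme \<Rightarrow> bool" where
  "module_closed F \<longleftrightarrow> 0 \<in> cs_carrier F \<and> (\<forall>a\<in>cs_carrier F. \<forall>a'\<in>cs_carrier F. a + a' \<in> cs_carrier F) \<and>
     (\<forall>a\<in>cs_carrier F. \<forall>r. cs_smult F r a \<in> cs_carrier F)"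

lemma formal_eval_tens_rel:
  assumes "z \<in> tens_rel F \<iota>" "balanced_map F \<iota> f" "module_closed F"
  shows "formal_eval f (cs_carrier F) z = 0"
  using assms(1)
proof (induction rule: tens_rel.induct)
  case rel_zero then show ?case by (simp add: formal_eval_zero)
next
  case (rel_add x y) then show ?case using assms(2) unfolding balanced_map_def by (simp add: formal_eval_add)
next
  case (rel_neg x) then show ?case
    using assms(2) formal_eval_diff[of f _ 0 x] unfolding balanced_map_def by (simp add: formal_eval_zero)
next
  case (rel_addl a a' s)
  then show ?case using assms unfolding balanced_map_def module_closed_def
    by (simp add: formal_eval_diff formal_eval_single)
next
  case (rel_addr a s s')
  then show ?case using assms(2) unfolding balanced_map_def right_additive_def
    by (simp add: formal_eval_diff[unfolded right_additive_def] formal_eval_single)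
next
  case (rel_bal a r s)
  then show ?case using assms unfolding balanced_map_def module_closed_def
    by (simp add: formal_eval_diff formal_eval_single)
qed

lemma diff_kring_facts:
  assumes "diff_kring D"
  shows "dr_emb D 1 = 1" "dr_delta D (r + s) = dr_delta D r + dr_delta D s"
    "dr_delta D (r * s) = r * dr_delta D s + dr_delta D r * s"
  using assms unfolding diff_kring_def by auto

text \<open>All higher derivatives of 1 vanish; this makes a \<otimes> 1 behave like a under n-products.\<close>

lemma diff_kring_deltapow_one:
  assumes "diff_kring D" "j > 0" shows "(dr_delta D ^^ j) 1 = 0"
proof -
  have d1: "dr_delta D 1 = 0" using diff_kring_facts(3)[OF assms(1), of 1 1] by simp
  have d0: "dr_delta D 0 = 0" using diff_kring_facts(2)[OF assms(1), of 0 0] by simp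
  have "(dr_delta D ^^ Suc i) 1 = 0" for i
    by (induction i) (auto simp: d1 d0)
  then show ?thesis using assms(2) by (metis gr0_implies_Suc)
qed

locale csa =
  fixes D :: "('k::field, 'r::comm_ring_1) dring" and A :: "('r, 'a::ab_group_add, 'z) csa_scheme"
  assumes csa: "conformal_superalgebra D A"
begin

lemma diff_kring: "diff_kring D"
  using csa unfolding conformal_superalgebra_def by auto

lemma graded: "graded_module A"
  using csa unfolding conformal_superalgebra_def by auto

abbreviation "car \<equiv> cs_carrier A"
abbreviation "sm \<equiv> cs_smult A"
abbreviation "der \<equiv> cs_der A"
abbreviation "np \<equiv> cs_nprod A"

lemma subgroups: "subgroup_of car" "subgroup_of (cs_even A)" "subgroup_of (cs_odd A)"
  and even_car: "cs_even A \<subseteq> car" and odd_car: "cs_odd A \<subseteq> car"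
  and car_split: "car = {x + y | x y. x \<in> cs_even A \<and> y \<in> cs_odd A}"
  and even_odd: "cs_even A \<inter> cs_odd A = {0}"
  using graded unfolding graded_module_def by meson+

lemma zero_car: "0 \<in> car" and add_car: "x \<in> car \<Longrightarrow> y \<in> car \<Longrightarrow> x + y \<in> car"
  and zero_even: "0 \<in> cs_even A" and add_even: "x \<in> cs_even A \<Longrightarrow> y \<in> cs_even A \<Longrightarrow> x + y \<in> cs_even A"
  and neg_even: "x \<in> cs_even A \<Longrightarrow> - x \<in> cs_even A"
  and zero_odd: "0 \<in> cs_odd A" and add_odd: "x \<in> cs_odd A \<Longrightarrow> y \<in> cs_odd A \<Longrightarrow> x + y \<in> cs_odd A"
  and neg_odd: "x \<in> cs_odd A \<Longrightarrow> - x \<in> cs_odd A"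
  using subgroups unfolding subgroup_of_def by auto

lemma module_axioms:
  "\<forall>r. \<forall>x\<in>car. sm r x \<in> car" "\<forall>r. \<forall>x\<in>cs_even A. sm r x \<in> cs_even A"
  "\<forall>r. \<forall>x\<in>cs_odd A. sm r x \<in> cs_odd A"
  "\<forall>r. \<forall>x\<in>car. \<forall>y\<in>car. sm r (x + y) = sm r x + sm r y"
  "\<forall>r s. \<forall>x\<in>car. sm (r + s) x = sm r x + sm s x"
  "\<forall>r s. \<forall>x\<in>car. sm (r * s) x = sm r (sm s x)" "\<forall>x\<in>car. sm 1 x = x"
  using graded unfolding graded_module_def by meson+

lemma sm_car: "x \<in> car \<Longrightarrow> sm r x \<in> car"
  and sm_even: "x \<in> cs_even A \<Longrightarrow> sm r x \<in> cs_even A"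
  and sm_odd: "x \<in> cs_odd A \<Longrightarrow> sm r x \<in> cs_odd A"
  and sm_add: "x \<in> car \<Longrightarrow> y \<in> car \<Longrightarrow> sm r (x + y) = sm r x + sm r y"
  and sm_radd: "x \<in> car \<Longrightarrow> sm (r + s) x = sm r x + sm s x"
  and sm_mult: "x \<in> car \<Longrightarrow> sm (r * s) x = sm r (sm s x)"
  and sm_one: "x \<in> car \<Longrightarrow> sm 1 x = x"
  using module_axioms by auto

lemma sum_car: "(\<And>i. i \<in> I \<Longrightarrow> g i \<in> car) \<Longrightarrow> sum g I \<in> car"
  by (induction I rule: infinite_finite_induct) (auto simp: zero_car add_car)
lemma sum_even: "(\<And>i. i \<in> I \<Longrightarrow> g i \<in> cs_even A) \<Longrightarrow> sum g I \<in> cs_even A"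
  by (induction I rule: infinite_finite_induct) (auto simp: zero_even add_even)
lemma sum_odd: "(\<And>i. i \<in> I \<Longrightarrow> g i \<in> cs_odd A) \<Longrightarrow> sum g I \<in> cs_odd A"
  by (induction I rule: infinite_finite_induct) (auto simp: zero_odd add_odd)

lemma sm_zero: "sm r 0 = 0"
  using sm_add[OF zero_car zero_car, of r] by simp
lemma sm_rzero: "x \<in> car \<Longrightarrow> sm 0 x = 0"
  using sm_radd[of x 0 0] by simp
lemma sm_sum: "(\<And>i. i \<in> I \<Longrightarrow> g i \<in> car) \<Longrightarrow> sm r (sum g I) = (\<Sum>i\<in>I. sm r (g i))"
  by (induction I rule: infinite_finite_induct) (auto simp: sm_zero sm_add sum_car)
lemma sm_rsum: "x \<in> car \<Longrightarrow> sm (sum g I) x = (\<Sum>i\<in>I. sm (g i) x)"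
  by (induction I rule: infinite_finite_induct) (auto simp: sm_rzero sm_radd)
lemma sm_comm: "x \<in> car \<Longrightarrow> sm r (sm s x) = sm s (sm r x)"
  by (metis mult.commute sm_mult)

lemma der_car: "x \<in> car \<Longrightarrow> der x \<in> car"
  and der_emb: "a \<in> car \<Longrightarrow> b \<in> car \<Longrightarrow>
    der (sm (dr_emb D c) a + b) = sm (dr_emb D c) (der a) + der b"
  and der_sm: "a \<in> car \<Longrightarrow> der (sm r a) = sm r (der a) + sm (dr_delta D r) a"
  using csa unfolding conformal_superalgebra_def by auto

lemma der_add: "a \<in> car \<Longrightarrow> b \<in> car \<Longrightarrow> der (a + b) = der a + der b"
  using der_emb[of a b 1] by (simp add: diff_kring_facts(1)[OF diff_kring] sm_one der_car)
lemma der_zero: "der 0 = 0"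
  using der_add[OF zero_car zero_car] by simp
lemma der_sum: "(\<And>i. i \<in> I \<Longrightarrow> g i \<in> car) \<Longrightarrow> der (sum g I) = (\<Sum>i\<in>I. der (g i))"
  by (induction I rule: infinite_finite_induct) (auto simp: der_zero der_add sum_car)
lemma der_sm_emb: "a \<in> car \<Longrightarrow> der (sm (dr_emb D c) a) = sm (dr_emb D c) (der a)"
  using der_emb[of a 0 c] by (simp add: zero_car der_zero)

lemma np_car: "a \<in> car \<Longrightarrow> b \<in> car \<Longrightarrow> np n a b \<in> car"
  and np_emb1: "a \<in> car \<Longrightarrow> a' \<in> car \<Longrightarrow> b \<in> car \<Longrightarrow>
    np n (sm (dr_emb D c) a + a') b = sm (dr_emb D c) (np n a b) + np n a' b"
  and np_emb2: "a \<in> car \<Longrightarrow> b \<in> car \<Longrightarrow> b' \<in> car \<Longrightarrow>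
    np n a (sm (dr_emb D c) b + b') = sm (dr_emb D c) (np n a b) + np n a b'"
  and np_vanish: "a \<in> car \<Longrightarrow> b \<in> car \<Longrightarrow> \<exists>N. \<forall>n\<ge>N. np n a b = 0"
  and np_sm2: "a \<in> car \<Longrightarrow> b \<in> car \<Longrightarrow> np n a (sm r b) = sm r (np n a b)"
  and np_sm1: "a \<in> car \<Longrightarrow> b \<in> car \<Longrightarrow> (\<forall>j\<ge>N. np (n + j) a b = 0) \<Longrightarrow>
    np n (sm r a) b
      = (\<Sum>j<N. sm (dr_emb D (inverse (of_nat (fact j))) * (dr_delta D ^^ j) r) (np (n + j) a b))"
  using csa unfolding conformal_superalgebra_def by auto

lemma np_add1: "a \<in> car \<Longrightarrow> a' \<in> car \<Longrightarrow> b \<in> car \<Longrightarrow> np n (a + a') b = np n a b + np n a' b"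
  using np_emb1[of a a' b n 1] by (simp add: diff_kring_facts(1)[OF diff_kring] sm_one np_car)
lemma np_add2: "a \<in> car \<Longrightarrow> b \<in> car \<Longrightarrow> b' \<in> car \<Longrightarrow> np n a (b + b') = np n a b + np n a b'"
  using np_emb2[of a b b' n 1] by (simp add: diff_kring_facts(1)[OF diff_kring] sm_one np_car)
lemma np_zero1: "b \<in> car \<Longrightarrow> np n 0 b = 0"
  using np_add1[OF zero_car zero_car, of b n] by simp
lemma np_zero2: "a \<in> car \<Longrightarrow> np n a 0 = 0"
  using np_add2[OF _ zero_car zero_car, of a n] by simp
lemma np_sum1: "(\<And>i. i \<in> I \<Longrightarrow> g i \<in> car) \<Longrightarrow> b \<in> car \<Longrightarrow> np n (sum g I) b = (\<Sum>i\<in>I. np n (g i) b)"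
  by (induction I rule: infinite_finite_induct) (auto simp: np_zero1 np_add1 sum_car)
lemma np_sum2: "(\<And>i. i \<in> I \<Longrightarrow> g i \<in> car) \<Longrightarrow> a \<in> car \<Longrightarrow> np n a (sum g I) = (\<Sum>i\<in>I. np n a (g i))"
  by (induction I rule: infinite_finite_induct) (auto simp: np_zero2 np_add2 sum_car)
lemma np_sm_emb1: "a \<in> car \<Longrightarrow> b \<in> car \<Longrightarrow> np n (sm (dr_emb D c) a) b = sm (dr_emb D c) (np n a b)"
  using np_emb1[OF _ zero_car, of a b n c] by (simp add: np_zero1)

lemma module_closed: "module_closed A"
  unfolding module_closed_def by (simp add: zero_car add_car sm_car)

end

section \<open>Base change and its universal property\<close>

locale base_change =
  fixes D1 :: "('k::field, 'r::comm_ring_1) dring" and D2 :: "('k, 's::comm_ring_1) dring"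
    and \<iota> :: "'r \<Rightarrow> 's" and F :: "('r, 'f::ab_group_add, 'z1) csa_scheme"
    and T :: "('s, 't::ab_group_add, 'z2) csa_scheme" and \<beta> :: "'f \<Rightarrow> 's \<Rightarrow> 't"
  assumes bc: "is_base_change D1 D2 \<iota> F T \<beta>"
begin

lemma T_csa: "conformal_superalgebra D2 T"
  using bc unfolding is_base_change_def by auto

sublocale T: csa D2 T by (rule csa.intro, rule T_csa)

lemma ext: "dring_ext D1 D2 \<iota>"
  using bc unfolding is_base_change_def by auto

lemma b_car: "a \<in> cs_carrier F \<Longrightarrow> \<beta> a s \<in> cs_carrier T"
  and b_add1: "a \<in> cs_carrier F \<Longrightarrow> a' \<in> cs_carrier F \<Longrightarrow> \<beta> (a + a') s = \<beta> a s + \<beta> a' s"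
  and b_add2: "a \<in> cs_carrier F \<Longrightarrow> \<beta> a (s + s') = \<beta> a s + \<beta> a s'"
  and b_bal: "a \<in> cs_carrier F \<Longrightarrow> \<beta> (cs_smult F r a) s = \<beta> a (\<iota> r * s)"
  and b_sm: "a \<in> cs_carrier F \<Longrightarrow> cs_smult T s' (\<beta> a s) = \<beta> a (s' * s)"
  and b_der: "a \<in> cs_carrier F \<Longrightarrow> cs_der T (\<beta> a s) = \<beta> (cs_der F a) s + \<beta> a (dr_delta D2 s)"
  and b_np: "a \<in> cs_carrier F \<Longrightarrow> b \<in> cs_carrier F \<Longrightarrow> (\<forall>j\<ge>N. cs_nprod F (n + j) a b = 0) \<Longrightarrow>
        cs_nprod T n (\<beta> a u) (\<beta> b s)
          = (\<Sum>j<N. \<beta> (cs_nprod F (n + j) a b)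
                        (dr_emb D2 (inverse (of_nat (fact j))) * (dr_delta D2 ^^ j) u * s))"
  using bc unfolding is_base_change_def by auto

lemma T_car: "cs_carrier T = {tens_eval T \<beta> x | x. supported_in x (cs_carrier F)}"
  and T_even: "cs_even T = {tens_eval T \<beta> x | x. supported_in x (cs_even F)}"
  and T_odd: "cs_odd T = {tens_eval T \<beta> x | x. supported_in x (cs_odd F)}"
  and b_inj: "supported_in x (cs_carrier F) \<Longrightarrow> tens_eval T \<beta> x = 0 \<Longrightarrow> x \<in> tens_rel F \<iota>"
  using bc unfolding is_base_change_def by auto

lemma right_additive_b: "right_additive \<beta> (cs_carrier F)"
  unfolding right_additive_def by (simp add: b_add2)

lemma b_zero2: "a \<in> cs_carrier F \<Longrightarrow> \<beta> a 0 = 0"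
  by (rule right_additive_zero[OF right_additive_b])

lemma b_sum2: "a \<in> cs_carrier F \<Longrightarrow> \<beta> a (sum g I) = (\<Sum>i\<in>I. \<beta> a (g i))"
  by (induction I rule: infinite_finite_induct) (auto simp: b_zero2 b_add2)

text \<open>tens_eval is the formal evaluation along \<beta> (integer multiples move into S).\<close>

lemma tens_eval_formal_eval:
  assumes "supported_in x X" "X \<subseteq> cs_carrier F"
  shows "tens_eval T \<beta> x = formal_eval \<beta> (cs_carrier F) x"
  unfolding tens_eval_def formal_eval_def
  by (rule sum.cong) (use assms in \<open>auto simp: supported_in_def b_sm\<close>)

lemma pure_tensor_sum:
  assumes "y \<in> {tens_eval T \<beta> x | x. supported_in x X}" "X \<subseteq> cs_carrier F"
  shows "\<exists>(I::('f\<times>'s) set) a s. finite I \<and> (\<forall>i\<in>I. a i \<in> X) \<and> y = (\<Sum>i\<in>I. \<beta> (a i) (s i))"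
proof -
  obtain x where x: "supported_in x X" "y = tens_eval T \<beta> x" using assms(1) by auto
  have "y = (\<Sum>p\<in>Poly_Mapping.keys x. \<beta> (fst p) (of_int (Poly_Mapping.lookup x p) * snd p))"
    unfolding x(2) tens_eval_formal_eval[OF x(1) assms(2)] formal_eval_def
    by (rule sum.cong) (use x(1) assms(2) in \<open>auto simp: supported_in_def\<close>)
  moreover have "finite (Poly_Mapping.keys x)" "\<forall>p\<in>Poly_Mapping.keys x. fst p \<in> X"
    using x(1) unfolding supported_in_def by auto
  ultimately show ?thesis
    by (intro exI[where x="Poly_Mapping.keys x"] exI[where x=fst]
        exI[where x="\<lambda>p. of_int (Poly_Mapping.lookup x p) * snd p"]) simp
qed

lemma pure_tensor_sum_car: "y \<in> cs_carrier T \<Longrightarrow>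
   \<exists>(I::('f\<times>'s) set) a s. finite I \<and> (\<forall>i\<in>I. a i \<in> cs_carrier F) \<and> y = (\<Sum>i\<in>I. \<beta> (a i) (s i))"
  using pure_tensor_sum[of y "cs_carrier F"] T_car by auto

lemma sum_b_car: "(\<And>i. i \<in> I \<Longrightarrow> a i \<in> cs_carrier F) \<Longrightarrow> (\<Sum>i\<in>I. \<beta> (a i) (s i)) \<in> cs_carrier T"
  by (rule T.sum_car) (simp add: b_car)

lemma b_graded:
  assumes "a \<in> X" "X \<subseteq> cs_carrier F"
  shows "\<beta> a s \<in> {tens_eval T \<beta> x | x. supported_in x X}"
proof -
  have "tens_eval T \<beta> (Poly_Mapping.single (a, s) 1) = \<beta> a s"
    using tens_eval_formal_eval[OF supported_single[OF assms(1)] assms(2)] assms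
    by (auto simp: formal_eval_single)
  then show ?thesis
    using supported_single[OF assms(1), of s 1] by (intro CollectI exI[of _ "Poly_Mapping.single (a, s) 1"]) simp
qed

lemma b_even: "a \<in> cs_even F \<Longrightarrow> cs_even F \<subseteq> cs_carrier F \<Longrightarrow> \<beta> a s \<in> cs_even T"
  using b_graded[of a "cs_even F" s] T_even by simp

lemma b_odd: "a \<in> cs_odd F \<Longrightarrow> cs_odd F \<subseteq> cs_carrier F \<Longrightarrow> \<beta> a s \<in> cs_odd T"
  using b_graded[of a "cs_odd F" s] T_odd by simp

text \<open>From here on the carrier of F is assumed closed under the module operations, so that
  every tensor relation stays supported in it.\<close>

context
  assumes F_closed: "module_closed F"
begin

lemma F_zero: "0 \<in> cs_carrier F" and F_add: "a \<in> cs_carrier F \<Longrightarrow> a' \<in> cs_carrier F \<Longrightarrow> a + a' \<in> cs_carrier F"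
  and F_sm: "a \<in> cs_carrier F \<Longrightarrow> cs_smult F r a \<in> cs_carrier F"
  using F_closed unfolding module_closed_def by auto

lemma b_zero1: "\<beta> 0 s = 0"
  using b_add1[OF F_zero F_zero, of s] by simp

lemma F_sum: "(\<And>i. i \<in> I \<Longrightarrow> g i \<in> cs_carrier F) \<Longrightarrow> sum g I \<in> cs_carrier F"
  by (induction I rule: infinite_finite_induct) (auto simp: F_zero F_add)

lemma b_sum1: "(\<And>i. i \<in> I \<Longrightarrow> g i \<in> cs_carrier F) \<Longrightarrow> \<beta> (sum g I) s = (\<Sum>i\<in>I. \<beta> (g i) s)"
  by (induction I rule: infinite_finite_induct) (auto simp: b_zero1 b_add1 F_sum)

text \<open>The value on y is computed from any representing formal combination; the choice does not
  matter because two representatives differ by a tensor relation, which f kills.\<close>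

definition tensor_lift :: "('f \<Rightarrow> 's \<Rightarrow> 'u::ab_group_add) \<Rightarrow> 't \<Rightarrow> 'u" where
  "tensor_lift f y = formal_eval f (cs_carrier F) (SOME x. supported_in x (cs_carrier F) \<and> tens_eval T \<beta> x = y)"

lemma representatives_agree:
  assumes "balanced_map F \<iota> f" "supported_in x (cs_carrier F)" "supported_in y (cs_carrier F)"
    "tens_eval T \<beta> x = tens_eval T \<beta> y"
  shows "formal_eval f (cs_carrier F) x = formal_eval f (cs_carrier F) y"
proof -
  have add: "right_additive f (cs_carrier F)" using assms(1) unfolding balanced_map_def by auto
  have "tens_eval T \<beta> (x - y) = 0"
    using assms(2-4) supported_diff[OF assms(2,3)]
    by (simp add: tens_eval_formal_eval formal_eval_diff[OF right_additive_b])
  then have "x - y \<in> tens_rel F \<iota>" using b_inj supported_diff assms(2,3) by blast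
  then have "formal_eval f (cs_carrier F) (x - y) = 0"
    using formal_eval_tens_rel assms(1) F_closed by blast
  then show ?thesis by (simp add: formal_eval_diff[OF add])
qed

lemma tensor_lift_eval:
  assumes "balanced_map F \<iota> f" "supported_in x (cs_carrier F)"
  shows "tensor_lift f (tens_eval T \<beta> x) = formal_eval f (cs_carrier F) x"
proof -
  let ?P = "\<lambda>x'. supported_in x' (cs_carrier F) \<and> tens_eval T \<beta> x' = tens_eval T \<beta> x"
  have "?P (SOME x'. ?P x')" by (rule someI[of ?P x]) (simp add: assms)
  then show ?thesis unfolding tensor_lift_def using representatives_agree[OF assms(1) _ assms(2)] by blast
qed

lemma tensor_lift_sum:
  assumes "balanced_map F \<iota> f" "finite I" "\<And>i. i \<in> I \<Longrightarrow> a i \<in> cs_carrier F"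
  shows "tensor_lift f (\<Sum>i\<in>I. \<beta> (a i) (s i)) = (\<Sum>i\<in>I. f (a i) (s i))"
proof -
  let ?x = "\<Sum>i\<in>I. Poly_Mapping.single (a i, s i) (1::int)"
  have add: "right_additive f (cs_carrier F)" using assms(1) unfolding balanced_map_def by auto
  have sx: "supported_in ?x (cs_carrier F)"
    by (rule supported_sum) (simp add: supported_single assms(3))
  have "tens_eval T \<beta> ?x = (\<Sum>i\<in>I. \<beta> (a i) (s i))"
    by (simp add: tens_eval_formal_eval[OF sx order_refl] formal_eval_sum[OF right_additive_b]
        formal_eval_single assms(3))
  moreover have "formal_eval f (cs_carrier F) ?x = (\<Sum>i\<in>I. f (a i) (s i))"
    by (simp add: formal_eval_sum[OF add] formal_eval_single assms(3))
  ultimately show ?thesis using tensor_lift_eval[OF assms(1) sx] by simp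
qed

lemma tensor_lift_pure:
  assumes "balanced_map F \<iota> f" "a \<in> cs_carrier F"
  shows "tensor_lift f (\<beta> a s) = f a s"
  using tensor_lift_sum[OF assms(1), of "{()}" "\<lambda>_. a" "\<lambda>_. s"] assms(2) by simp

lemma tensor_lift_add:
  assumes "balanced_map F \<iota> f" "y \<in> cs_carrier T" "y' \<in> cs_carrier T"
  shows "tensor_lift f (y + y') = tensor_lift f y + tensor_lift f y'"
proof -
  have add: "right_additive f (cs_carrier F)" using assms(1) unfolding balanced_map_def by auto
  obtain x x' where x: "supported_in x (cs_carrier F)" "y = tens_eval T \<beta> x"
    and x': "supported_in x' (cs_carrier F)" "y' = tens_eval T \<beta> x'"
    using assms(2,3) T_car by auto
  have "y + y' = tens_eval T \<beta> (x + x')"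
    using x x' supported_add[OF x(1) x'(1)]
    by (simp add: tens_eval_formal_eval formal_eval_add[OF right_additive_b])
  then show ?thesis using x x' supported_add[OF x(1) x'(1)]
    by (simp add: tensor_lift_eval[OF assms(1)] formal_eval_add[OF add])
qed

lemma tensor_lift_zero: "balanced_map F \<iota> f \<Longrightarrow> tensor_lift f 0 = 0"
  using tensor_lift_add[OF _ T.zero_car T.zero_car] by simp

lemma tensor_lift_sum_car:
  assumes "balanced_map F \<iota> f" "\<And>i. i \<in> I \<Longrightarrow> g i \<in> cs_carrier T"
  shows "tensor_lift f (sum g I) = (\<Sum>i\<in>I. tensor_lift f (g i))"
  using assms(2)
  by (induction I rule: infinite_finite_induct)
    (auto simp: tensor_lift_zero[OF assms(1)] tensor_lift_add[OF assms(1)] T.sum_car)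

end
end

locale base_change_hom = base_change D1 D2 \<iota> F T \<beta>
  for D1 :: "('k::field, 'r::comm_ring_1) dring" and D2 :: "('k, 's::comm_ring_1) dring"
    and \<iota> :: "'r \<Rightarrow> 's" and F :: "('r, 'f::ab_group_add, 'z1) csa_scheme"
    and T :: "('s, 't::ab_group_add, 'z2) csa_scheme" and \<beta> :: "'f \<Rightarrow> 's \<Rightarrow> 't" +
  fixes D3 :: "('k, 's3::comm_ring_1) dring" and T' :: "('s3, 'u::ab_group_add, 'z3) csa_scheme"
    and \<kappa> :: "'s \<Rightarrow> 's3" and g :: "'f \<Rightarrow> 'u"
  assumes T'_csa: "conformal_superalgebra D3 T'"
    and F_closed: "module_closed F"
    and F_der: "\<And>a. a \<in> cs_carrier F \<Longrightarrow> cs_der F a \<in> cs_carrier F"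
    and F_np: "\<And>a b n. a \<in> cs_carrier F \<Longrightarrow> b \<in> cs_carrier F \<Longrightarrow> cs_nprod F n a b \<in> cs_carrier F"
    and F_vanish: "\<And>a b. a \<in> cs_carrier F \<Longrightarrow> b \<in> cs_carrier F \<Longrightarrow> \<exists>N. \<forall>n\<ge>N. cs_nprod F n a b = 0"
    and F_even: "cs_even F \<subseteq> cs_carrier F" and F_odd: "cs_odd F \<subseteq> cs_carrier F"
    and k_add: "\<And>x y. \<kappa> (x + y) = \<kappa> x + \<kappa> y"
    and k_mult: "\<And>x y. \<kappa> (x * y) = \<kappa> x * \<kappa> y"
    and k_emb: "\<And>c. \<kappa> (dr_emb D2 c) = dr_emb D3 c"
    and k_delta: "\<And>r. \<kappa> (dr_delta D2 r) = dr_delta D3 (\<kappa> r)"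
    and g_car: "\<And>a. a \<in> cs_carrier F \<Longrightarrow> g a \<in> cs_carrier T'"
    and g_even: "\<And>a. a \<in> cs_even F \<Longrightarrow> g a \<in> cs_even T'"
    and g_odd: "\<And>a. a \<in> cs_odd F \<Longrightarrow> g a \<in> cs_odd T'"
    and g_add: "\<And>a a'. a \<in> cs_carrier F \<Longrightarrow> a' \<in> cs_carrier F \<Longrightarrow> g (a + a') = g a + g a'"
    and g_sm: "\<And>a r. a \<in> cs_carrier F \<Longrightarrow> g (cs_smult F r a) = cs_smult T' (\<kappa> (\<iota> r)) (g a)"
    and g_der: "\<And>a. a \<in> cs_carrier F \<Longrightarrow> g (cs_der F a) = cs_der T' (g a)"
    and g_np: "\<And>a b n. a \<in> cs_carrier F \<Longrightarrow> b \<in> cs_carrier F \<Longrightarrow>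
        g (cs_nprod F n a b) = cs_nprod T' n (g a) (g b)"
begin

sublocale T': csa D3 T' by (rule csa.intro, rule T'_csa)

definition bc_map :: "'t \<Rightarrow> 'u" where
  "bc_map = tensor_lift (\<lambda>a s. cs_smult T' (\<kappa> s) (g a))"

lemma balanced: "balanced_map F \<iota> (\<lambda>a s. cs_smult T' (\<kappa> s) (g a))"
  unfolding balanced_map_def right_additive_def
  by (auto simp: k_add T'.sm_radd g_car g_add T'.sm_add g_sm F_sm[OF F_closed] k_mult
      T'.sm_mult[symmetric] mult.commute)

lemma bc_map_pure: "a \<in> cs_carrier F \<Longrightarrow> bc_map (\<beta> a s) = cs_smult T' (\<kappa> s) (g a)"
  unfolding bc_map_def by (rule tensor_lift_pure[OF F_closed balanced])

lemma bc_map_sum: assumes "finite I" "\<And>i. i \<in> I \<Longrightarrow> a i \<in> cs_carrier F"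
  shows "bc_map (\<Sum>i\<in>I. \<beta> (a i) (s i)) = (\<Sum>i\<in>I. cs_smult T' (\<kappa> (s i)) (g (a i)))"
  unfolding bc_map_def by (rule tensor_lift_sum[OF F_closed balanced assms])

lemma bc_map_add: "y \<in> cs_carrier T \<Longrightarrow> y' \<in> cs_carrier T \<Longrightarrow> bc_map (y + y') = bc_map y + bc_map y'"
  unfolding bc_map_def by (rule tensor_lift_add[OF F_closed balanced])

lemma bc_map_sum_car: "(\<And>i. i \<in> I \<Longrightarrow> h i \<in> cs_carrier T) \<Longrightarrow> bc_map (sum h I) = (\<Sum>i\<in>I. bc_map (h i))"
  unfolding bc_map_def by (rule tensor_lift_sum_car[OF F_closed balanced])

lemma bc_map_car: "y \<in> cs_carrier T \<Longrightarrow> bc_map y \<in> cs_carrier T'"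
  using pure_tensor_sum_car[of y] by (auto simp: bc_map_sum intro!: T'.sum_car T'.sm_car g_car)

lemma bc_map_even: "y \<in> cs_even T \<Longrightarrow> bc_map y \<in> cs_even T'"
proof -
  assume "y \<in> cs_even T"
  then obtain I :: "('f\<times>'s) set" and a s
    where "finite I" "\<forall>i\<in>I. a i \<in> cs_even F" "y = (\<Sum>i\<in>I. \<beta> (a i) (s i))"
    using pure_tensor_sum[of y "cs_even F"] T_even F_even by auto
  moreover then have "\<forall>i\<in>I. a i \<in> cs_carrier F" using F_even by auto
  ultimately show ?thesis by (auto simp: bc_map_sum intro!: T'.sum_even T'.sm_even g_even)
qed

lemma bc_map_odd: "y \<in> cs_odd T \<Longrightarrow> bc_map y \<in> cs_odd T'"
proof -
  assume "y \<in> cs_odd T"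
  then obtain I :: "('f\<times>'s) set" and a s
    where "finite I" "\<forall>i\<in>I. a i \<in> cs_odd F" "y = (\<Sum>i\<in>I. \<beta> (a i) (s i))"
    using pure_tensor_sum[of y "cs_odd F"] T_odd F_odd by auto
  moreover then have "\<forall>i\<in>I. a i \<in> cs_carrier F" using F_odd by auto
  ultimately show ?thesis by (auto simp: bc_map_sum intro!: T'.sum_odd T'.sm_odd g_odd)
qed

lemma bc_map_sm: "y \<in> cs_carrier T \<Longrightarrow> bc_map (cs_smult T s y) = cs_smult T' (\<kappa> s) (bc_map y)"
proof -
  assume "y \<in> cs_carrier T"
  then obtain I :: "('f\<times>'s) set" and a u
    where I: "finite I" "\<forall>i\<in>I. a i \<in> cs_carrier F" "y = (\<Sum>i\<in>I. \<beta> (a i) (u i))"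
    using pure_tensor_sum_car by blast
  have "cs_smult T s y = (\<Sum>i\<in>I. \<beta> (a i) (s * u i))"
    using I by (simp add: T.sm_sum b_car b_sm)
  then have "bc_map (cs_smult T s y) = (\<Sum>i\<in>I. cs_smult T' (\<kappa> (s * u i)) (g (a i)))"
    using I by (simp add: bc_map_sum)
  also have "\<dots> = cs_smult T' (\<kappa> s) (\<Sum>i\<in>I. cs_smult T' (\<kappa> (u i)) (g (a i)))"
    using I by (simp add: T'.sm_sum T'.sm_car g_car k_mult T'.sm_mult)
  finally show ?thesis using I by (simp add: bc_map_sum)
qed

lemma bc_map_der: "y \<in> cs_carrier T \<Longrightarrow> bc_map (cs_der T y) = cs_der T' (bc_map y)"
proof -
  assume "y \<in> cs_carrier T"
  then obtain I :: "('f\<times>'s) set" and a u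
    where I: "finite I" "\<forall>i\<in>I. a i \<in> cs_carrier F" "y = (\<Sum>i\<in>I. \<beta> (a i) (u i))"
    using pure_tensor_sum_car by blast
  have "cs_der T y = (\<Sum>i\<in>I. \<beta> (cs_der F (a i)) (u i)) + (\<Sum>i\<in>I. \<beta> (a i) (dr_delta D2 (u i)))"
    using I by (simp add: T.der_sum b_car b_der sum.distrib)
  then have "bc_map (cs_der T y) = (\<Sum>i\<in>I. cs_smult T' (\<kappa> (u i)) (g (cs_der F (a i))))
        + (\<Sum>i\<in>I. cs_smult T' (\<kappa> (dr_delta D2 (u i))) (g (a i)))"
    using I by (simp add: bc_map_add sum_b_car F_der bc_map_sum)
  also have "\<dots> = cs_der T' (\<Sum>i\<in>I. cs_smult T' (\<kappa> (u i)) (g (a i)))"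
    using I by (simp add: T'.der_sum T'.sm_car g_car T'.der_sm g_der k_delta sum.distrib)
  finally show ?thesis using I by (simp add: bc_map_sum)
qed

lemma k_deltapow: "\<kappa> ((dr_delta D2 ^^ j) r) = (dr_delta D3 ^^ j) (\<kappa> r)"
  by (induction j) (auto simp: k_delta)

text \<open>On pure tensors the n-product formula of the base change is matched, term by term, by
  the sesquilinearity axiom of T' (this is where \<kappa> must commute with the derivations).\<close>

lemma bc_map_np_pure:
  assumes a: "a \<in> cs_carrier F" and b: "b \<in> cs_carrier F"
  shows "bc_map (cs_nprod T n (\<beta> a r) (\<beta> b s)) = cs_nprod T' n (bc_map (\<beta> a r)) (bc_map (\<beta> b s))"
proof -
  obtain N where N: "\<forall>m\<ge>N. cs_nprod F m a b = 0" using F_vanish[OF a b] by blast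
  then have N': "\<forall>j\<ge>N. cs_nprod F (n + j) a b = 0" by auto
  have g_zero: "g 0 = 0"
    using g_add[OF F_zero[OF F_closed] F_zero[OF F_closed]] by simp
  have N'': "\<forall>j\<ge>N. cs_nprod T' (n + j) (g a) (g b) = 0"
    using N' by (simp add: g_np[OF a b, symmetric] g_zero)
  have "bc_map (cs_nprod T n (\<beta> a r) (\<beta> b s)) =
      (\<Sum>j<N. cs_smult T' (\<kappa> (dr_emb D2 (inverse (of_nat (fact j))) * (dr_delta D2 ^^ j) r * s))
         (g (cs_nprod F (n + j) a b)))"
    by (simp add: b_np[OF a b N'] bc_map_sum F_np a b)
  also have "\<dots> = (\<Sum>j<N. cs_smult T' (\<kappa> s)
      (cs_smult T' (dr_emb D3 (inverse (of_nat (fact j))) * (dr_delta D3 ^^ j) (\<kappa> r))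
         (cs_nprod T' (n + j) (g a) (g b))))"
    by (rule sum.cong)
      (simp_all add: k_mult k_emb k_deltapow g_np a b T'.sm_mult[symmetric] T'.np_car g_car mult_ac)
  also have "\<dots> = cs_nprod T' n (cs_smult T' (\<kappa> r) (g a)) (cs_smult T' (\<kappa> s) (g b))"
    by (simp add: T'.np_sm2 T'.sm_car g_car a b T'.np_sm1[OF _ _ N''] T'.sm_sum T'.np_car)
  finally show ?thesis by (simp add: bc_map_pure a b)
qed

lemma bc_map_np: "y \<in> cs_carrier T \<Longrightarrow> z \<in> cs_carrier T \<Longrightarrow>
   bc_map (cs_nprod T n y z) = cs_nprod T' n (bc_map y) (bc_map z)"
proof -
  assume yz: "y \<in> cs_carrier T" "z \<in> cs_carrier T"
  obtain I :: "('f\<times>'s) set" and a u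
    where I: "finite I" "\<forall>i\<in>I. a i \<in> cs_carrier F" "y = (\<Sum>i\<in>I. \<beta> (a i) (u i))"
    using pure_tensor_sum_car[OF yz(1)] by blast
  obtain J :: "('f\<times>'s) set" and b v
    where J: "finite J" "\<forall>i\<in>J. b i \<in> cs_carrier F" "z = (\<Sum>i\<in>J. \<beta> (b i) (v i))"
    using pure_tensor_sum_car[OF yz(2)] by blast
  have "bc_map (cs_nprod T n y z)
      = (\<Sum>i\<in>I. \<Sum>j\<in>J. bc_map (cs_nprod T n (\<beta> (a i) (u i)) (\<beta> (b j) (v j))))"
    using I J by (simp add: T.np_sum1 T.np_sum2 b_car sum_b_car bc_map_sum_car T.np_car T.sum_car
        sum.swap[of _ J])
  also have "\<dots> = (\<Sum>i\<in>I. \<Sum>j\<in>J. cs_nprod T' n (bc_map (\<beta> (a i) (u i))) (bc_map (\<beta> (b j) (v j))))"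
    using I J by (simp add: bc_map_np_pure)
  also have "\<dots> = cs_nprod T' n (bc_map y) (bc_map z)"
    using I J by (simp add: bc_map_sum bc_map_pure T'.np_sum1 T'.np_sum2 T'.sm_car g_car T'.sum_car
        sum.swap[of _ J])
  finally show ?thesis .
qed

end

lemma base_change_hom_is_hom:
  assumes "base_change_hom D1 D2 \<iota> F T \<beta> D2 T' id g"
  shows "csa_hom T T' (base_change_hom.bc_map F T \<beta> T' id g)"
proof -
  interpret base_change_hom D1 D2 \<iota> F T \<beta> D2 T' id g by (rule assms)
  show ?thesis unfolding csa_hom_def
    by (auto simp: bc_map_car bc_map_even bc_map_odd bc_map_add bc_map_sm bc_map_der bc_map_np)
qed

lemma iso_from_left_inverse:
  assumes "csa_hom A B \<phi>" "\<And>x. x \<in> cs_carrier A \<Longrightarrow> \<psi> (\<phi> x) = x"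
    "\<And>y. y \<in> cs_carrier B \<Longrightarrow> \<exists>x\<in>cs_carrier A. \<phi> x = y"
  shows "csa_iso A B \<phi>"
proof -
  have "inj_on \<phi> (cs_carrier A)"
    by (rule inj_on_inverseI[of _ \<psi>]) (rule assms(2))
  moreover have "\<phi> ` cs_carrier A \<subseteq> cs_carrier B"
    using assms(1) unfolding csa_hom_def by (elim conjE)
  moreover have "cs_carrier B \<subseteq> \<phi> ` cs_carrier A"
    using assms(3) by force
  ultimately show ?thesis
    using assms(1) unfolding csa_iso_def bij_betw_def by blast
qed

lemma iso_comp:
  assumes "csa_iso A B \<phi>" "csa_iso B C \<psi>"
  shows "csa_iso A C (\<psi> \<circ> \<phi>)"
proof -
  have "csa_hom A C (\<psi> \<circ> \<phi>)"
    using assms unfolding csa_iso_def csa_hom_def by (simp add: image_subset_iff)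
  then show ?thesis
    using assms unfolding csa_iso_def by (blast intro: bij_betw_trans)
qed

text \<open>An injective homomorphism reflects the parity: since the carrier is the direct sum
  of its even and odd parts, a nonzero odd component of x would map to a nonzero element
  that is both even and odd.\<close>

lemma injective_hom_reflects_parity:
  assumes A: "conformal_superalgebra D A" and B: "conformal_superalgebra D B"
    and hom: "csa_hom A B \<phi>" and inj: "inj_on \<phi> (cs_carrier A)" and x: "x \<in> cs_carrier A"
  shows "\<phi> x \<in> cs_even B \<Longrightarrow> x \<in> cs_even A" and "\<phi> x \<in> cs_odd B \<Longrightarrow> x \<in> cs_odd A"
proof -
  interpret A: csa D A by (rule csa.intro, rule A)
  interpret B: csa D B by (rule csa.intro, rule B)
  obtain e o' where eo: "x = e + o'" "e \<in> cs_even A" "o' \<in> cs_odd A"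
    using x A.car_split by blast
  have ec: "e \<in> cs_carrier A" and oc: "o' \<in> cs_carrier A"
    using subsetD[OF A.even_car eo(2)] subsetD[OF A.odd_car eo(3)] .
  have hadd: "\<And>u v. u \<in> cs_carrier A \<Longrightarrow> v \<in> cs_carrier A \<Longrightarrow> \<phi> (u + v) = \<phi> u + \<phi> v"
    and ev: "\<phi> e \<in> cs_even B" and od: "\<phi> o' \<in> cs_odd B"
    using hom eo unfolding csa_hom_def by blast+
  have add: "\<phi> x = \<phi> e + \<phi> o'" using hadd[OF ec oc] eo(1) by simp
  have phi0: "\<phi> 0 = 0" using hadd[OF A.zero_car A.zero_car] by simp
  have vanish: "c = 0" if c: "c \<in> cs_carrier A" "\<phi> c \<in> cs_even B" "\<phi> c \<in> cs_odd B" for c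
  proof -
    have "\<phi> c \<in> cs_even B \<inter> cs_odd B" using c(2,3) by (rule IntI)
    then have "\<phi> c = \<phi> 0" using B.even_odd phi0 by simp
    then show ?thesis by (rule inj_onD[OF inj _ c(1) A.zero_car])
  qed
  show "x \<in> cs_even A" if x_even: "\<phi> x \<in> cs_even B"
  proof -
    have "\<phi> o' = \<phi> x + - \<phi> e" using add by simp
    also have "\<dots> \<in> cs_even B" using B.add_even[OF x_even B.neg_even[OF ev]] .
    finally have "o' = 0" using vanish[OF oc _ od] by blast
    then show ?thesis using eo by simp
  qed
  show "x \<in> cs_odd A" if x_odd: "\<phi> x \<in> cs_odd B"
  proof -
    have "\<phi> e = \<phi> x + - \<phi> o'" using add by simp
    also have "\<dots> \<in> cs_odd B" using B.add_odd[OF x_odd B.neg_odd[OF od]] .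
    finally have "e = 0" using vanish[OF ec ev] by blast
    then show ?thesis using eo by simp
  qed
qed

lemma iso_inv:
  assumes A: "conformal_superalgebra D A" and B: "conformal_superalgebra D B"
    and iso: "csa_iso A B \<phi>"
  shows "csa_iso B A (inv_into (cs_carrier A) \<phi>)"
proof -
  interpret A: csa D A by (rule csa.intro, rule A)
  let ?\<psi> = "inv_into (cs_carrier A) \<phi>"
  have hom: "csa_hom A B \<phi>" and bij: "bij_betw \<phi> (cs_carrier A) (cs_carrier B)"
    using iso unfolding csa_iso_def by auto
  have inj: "inj_on \<phi> (cs_carrier A)" and im: "\<phi> ` cs_carrier A = cs_carrier B"
    using bij unfolding bij_betw_def by auto
  have psi_car: "\<And>y. y \<in> cs_carrier B \<Longrightarrow> ?\<psi> y \<in> cs_carrier A"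
    using im by (metis inv_into_into)
  have phi_psi: "\<And>y. y \<in> cs_carrier B \<Longrightarrow> \<phi> (?\<psi> y) = y"
    using im by (metis f_inv_into_f)
  have psi_eq: "\<And>x y. x \<in> cs_carrier A \<Longrightarrow> \<phi> x = y \<Longrightarrow> ?\<psi> y = x"
    using inj by (metis inv_into_f_f)
  have B_even: "cs_even B \<subseteq> cs_carrier B" and B_odd: "cs_odd B \<subseteq> cs_carrier B"
    using csa.even_car[OF csa.intro[OF B]] csa.odd_car[OF csa.intro[OF B]] .
  have "csa_hom B A ?\<psi>"
    unfolding csa_hom_def
  proof (intro conjI ballI allI)
    show "?\<psi> ` cs_carrier B \<subseteq> cs_carrier A" using psi_car by blast
    show "?\<psi> ` cs_even B \<subseteq> cs_even A"
      using injective_hom_reflects_parity(1)[OF A B hom inj] psi_car phi_psi B_even by auto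
    show "?\<psi> ` cs_odd B \<subseteq> cs_odd A"
      using injective_hom_reflects_parity(2)[OF A B hom inj] psi_car phi_psi B_odd by auto
  next
    fix x y assume "x \<in> cs_carrier B" "y \<in> cs_carrier B"
    then show "?\<psi> (x + y) = ?\<psi> x + ?\<psi> y"
      using hom unfolding csa_hom_def by (intro psi_eq) (simp_all add: A.add_car psi_car phi_psi)
  next
    fix r x assume "x \<in> cs_carrier B"
    then show "?\<psi> (cs_smult B r x) = cs_smult A r (?\<psi> x)"
      using hom unfolding csa_hom_def by (intro psi_eq) (simp_all add: psi_car phi_psi A.sm_car)
  next
    fix x assume "x \<in> cs_carrier B"
    then show "?\<psi> (cs_der B x) = cs_der A (?\<psi> x)"
      using hom unfolding csa_hom_def by (intro psi_eq) (simp_all add: psi_car phi_psi A.der_car)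
  next
    fix n x y assume "x \<in> cs_carrier B" "y \<in> cs_carrier B"
    then show "?\<psi> (cs_nprod B n x y) = cs_nprod A n (?\<psi> x) (?\<psi> y)"
      using hom unfolding csa_hom_def by (intro psi_eq) (simp_all add: psi_car phi_psi A.np_car)
  qed
  moreover have "bij_betw ?\<psi> (cs_carrier B) (cs_carrier A)"
    using bij by (rule bij_betw_inv_into)
  ultimately show ?thesis unfolding csa_iso_def by blast
qed

lemma root_powi_mod:
  fixes z :: "'k::field"
  assumes "z ^ m = 1" "m \<ge> 1"
  shows "z powi d = z ^ nat (d mod int m)"
proof -
  have z0: "z \<noteq> 0" using assms by (metis one_neq_zero power_0_left not_one_le_zero)
  have "z powi d = z powi (int m * (d div int m)) * z powi (d mod int m)"
    by (metis power_int_add z0 mult_div_mod_eq)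
  also have "z powi (int m * (d div int m)) = 1"
    by (simp add: power_int_mult assms(1))
  also have "z powi (d mod int m) = z ^ nat (d mod int m)"
    using assms(2) by (simp add: power_int_def)
  finally show ?thesis by simp
qed

lemma primitive_root_powi_one:
  fixes z :: "'k::field"
  assumes "z ^ m = 1" "m \<ge> 1" "\<forall>j. 0 < j \<and> j < m \<longrightarrow> z ^ j \<noteq> 1"
  shows "z powi d = 1 \<longleftrightarrow> int m dvd d"
proof -
  have r: "z powi d = z ^ nat (d mod int m)" by (rule root_powi_mod[OF assms(1,2)])
  have lt: "nat (d mod int m) < m" using assms(2) by (simp add: nat_less_iff)
  have "z powi d = 1 \<longleftrightarrow> nat (d mod int m) = 0"
    using r lt assms(3) by (metis gr0I power_0)
  also have "\<dots> \<longleftrightarrow> int m dvd d"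
  proof -
    have "0 \<le> d mod int m" using assms(2) by simp
    then show ?thesis by (auto simp: dvd_eq_mod_eq_0)
  qed
  finally show ?thesis .
qed

lemma root_of_unity_geometric_sum:
  fixes w :: "'k::field"
  assumes "w ^ m = 1" "w \<noteq> 1"
  shows "(\<Sum>l<m. w ^ l) = 0"
  using geometric_sum[OF assms(2), of m] assms(1) by simp

lemma incl_single: "incl_RS m (Poly_Mapping.single j c) = Poly_Mapping.single (int m * j) (c::'k::field)"
  unfolding incl_RS_def by (cases "c = 0") auto

lemma puiseux_deriv_single: "puiseux_deriv m (Poly_Mapping.single i c) =
   Poly_Mapping.single (i - int m) (of_int i / of_nat m * (c::'k::field_char_0))"
  unfolding puiseux_deriv_def by (cases "c = 0") auto

lemma puiseux_deriv_one: "puiseux_deriv m (1 :: int \<Rightarrow>\<^sub>0 'k::field_char_0) = 0"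
  using puiseux_deriv_single[of m 0 "1::'k"] by simp

lemma puiseux_deriv_pow_single: "\<exists>c'. (puiseux_deriv m ^^ l) (Poly_Mapping.single i (c::'k::field_char_0)) =
   Poly_Mapping.single (i - int l * int m) c'"
proof (induction l)
  case (Suc l)
  then obtain c' where "(puiseux_deriv m ^^ l) (Poly_Mapping.single i c) = Poly_Mapping.single (i - int l * int m) c'"
    by blast
  then show ?case by (auto simp: puiseux_deriv_single algebra_simps)
qed auto

lemma sum_lessThan_only_zero:
  fixes h :: "nat \<Rightarrow> 'a::comm_monoid_add"
  assumes "N > 0" "\<And>j. j > 0 \<Longrightarrow> h j = 0"
  shows "(\<Sum>j<N. h j) = h 0"
proof -
  have "(\<Sum>j<N. h j) = (\<Sum>j\<in>{0}. h j)"
    by (rule sum.mono_neutral_right) (use assms in auto)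
  then show ?thesis by simp
qed

section \<open>Eigenspace decomposition for an automorphism of finite order\<close>

text \<open>Since char k = 0, A is the direct sum of the eigenspaces A_i (i mod m)
  and the projection onto A_k is (1/m) \<Sum>_l \<zeta>^(-kl) \<sigma>^l.\<close>

locale finite_order_automorphism =
  fixes A :: "('k::field_char_0, 'a::ab_group_add) csa" and \<sigma> :: "'a \<Rightarrow> 'a"
    and m :: nat and \<zeta> :: 'k
  assumes A_csa: "conformal_superalgebra kring A"
    and sigma_hom: "csa_hom A A \<sigma>"
    and m_pos: "m \<ge> 1"
    and sigma_period: "\<forall>x\<in>cs_carrier A. (\<sigma> ^^ m) x = x"
    and zeta_root: "\<zeta> ^ m = 1"
    and zeta_primitive: "\<forall>j. 0 < j \<and> j < m \<longrightarrow> \<zeta> ^ j \<noteq> 1"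
begin

sublocale A: csa kring A by (rule csa.intro, rule A_csa)

abbreviation "eig \<equiv> eigenspace A \<sigma> \<zeta>"

lemma zeta_nonzero: "\<zeta> \<noteq> 0"
  using zeta_root m_pos by (metis one_neq_zero power_0_left not_one_le_zero)

lemma kring_simps[simp]: "dr_emb kring c = c" "dr_delta kring r = 0"
  by (simp_all add: kring_def)

lemma s_car: "x \<in> cs_carrier A \<Longrightarrow> \<sigma> x \<in> cs_carrier A"
  and s_add: "x \<in> cs_carrier A \<Longrightarrow> y \<in> cs_carrier A \<Longrightarrow> \<sigma> (x + y) = \<sigma> x + \<sigma> y"
  and s_sm: "x \<in> cs_carrier A \<Longrightarrow> \<sigma> (cs_smult A c x) = cs_smult A c (\<sigma> x)"
  and s_der: "x \<in> cs_carrier A \<Longrightarrow> \<sigma> (cs_der A x) = cs_der A (\<sigma> x)"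
  and s_np: "x \<in> cs_carrier A \<Longrightarrow> y \<in> cs_carrier A \<Longrightarrow> \<sigma> (cs_nprod A n x y) = cs_nprod A n (\<sigma> x) (\<sigma> y)"
  using sigma_hom unfolding csa_hom_def by blast+

lemma s_zero: "\<sigma> 0 = 0"
  using s_add[OF A.zero_car A.zero_car] by simp

lemma s_sum: "(\<And>i. i \<in> I \<Longrightarrow> g i \<in> cs_carrier A) \<Longrightarrow> \<sigma> (sum g I) = (\<Sum>i\<in>I. \<sigma> (g i))"
  by (induction I rule: infinite_finite_induct) (auto simp: s_zero s_add A.sum_car)

lemma s_pow_car: "x \<in> cs_carrier A \<Longrightarrow> (\<sigma> ^^ l) x \<in> cs_carrier A"
  by (induction l) (auto simp: s_car)

lemma s_pow_add: "x \<in> cs_carrier A \<Longrightarrow> y \<in> cs_carrier A \<Longrightarrow> (\<sigma> ^^ l) (x + y) = (\<sigma> ^^ l) x + (\<sigma> ^^ l) y"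
  by (induction l) (auto simp: s_add s_pow_car)

lemma s_pow_sm: "x \<in> cs_carrier A \<Longrightarrow> (\<sigma> ^^ l) (cs_smult A c x) = cs_smult A c ((\<sigma> ^^ l) x)"
  by (induction l) (auto simp: s_sm s_pow_car)

lemma eig_car: "x \<in> eig i \<Longrightarrow> x \<in> cs_carrier A"
  and eig_eq: "x \<in> eig i \<Longrightarrow> \<sigma> x = cs_smult A (\<zeta> powi i) x"
  unfolding eigenspace_def by auto

lemma eigI: "x \<in> cs_carrier A \<Longrightarrow> \<sigma> x = cs_smult A (\<zeta> powi i) x \<Longrightarrow> x \<in> eig i"
  unfolding eigenspace_def by auto

lemma eig_zero: "0 \<in> eig i"
  by (rule eigI) (simp_all add: A.zero_car s_zero A.sm_zero)

lemma eig_add: "x \<in> eig i \<Longrightarrow> y \<in> eig i \<Longrightarrow> x + y \<in> eig i"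
  by (rule eigI) (simp_all add: A.add_car eig_car s_add eig_eq A.sm_add)

lemma eig_sm: "x \<in> eig i \<Longrightarrow> cs_smult A c x \<in> eig i"
  by (rule eigI) (simp_all add: A.sm_car eig_car s_sm eig_eq A.sm_comm)

lemma eig_shift: "x \<in> eig i \<Longrightarrow> x \<in> eig (i + int m * j)"
  unfolding eigenspace_def by (simp add: root_powi_mod[OF zeta_root m_pos])

lemma eig_der: "x \<in> eig i \<Longrightarrow> cs_der A x \<in> eig i"
  by (rule eigI) (use A.der_sm_emb[of x "\<zeta> powi i"] in \<open>simp_all add: A.der_car eig_car s_der eig_eq\<close>)

lemma eig_np: "x \<in> eig i \<Longrightarrow> y \<in> eig j \<Longrightarrow> cs_nprod A n x y \<in> eig (i + j)"
  by (rule eigI)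
    (use A.np_sm_emb1[of x "cs_smult A (\<zeta> powi j) y" n "\<zeta> powi i"] in
      \<open>simp_all add: A.np_car eig_car s_np eig_eq A.sm_car A.np_sm2 A.sm_mult[symmetric]
        power_int_add zeta_nonzero\<close>)

lemma s_pow_eig: "x \<in> eig i \<Longrightarrow> (\<sigma> ^^ l) x = cs_smult A ((\<zeta> powi i) ^ l) x"
  by (induction l) (simp_all add: A.sm_one eig_car s_sm eig_eq A.sm_mult[symmetric] A.sm_car mult.commute)

definition eigen_projection :: "nat \<Rightarrow> 'a \<Rightarrow> 'a" where
  "eigen_projection k a
     = cs_smult A (inverse (of_nat m)) (\<Sum>l<m. cs_smult A (inverse \<zeta> ^ (k * l)) ((\<sigma> ^^ l) a))"

lemma projection_car: "a \<in> cs_carrier A \<Longrightarrow> eigen_projection k a \<in> cs_carrier A"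
  unfolding eigen_projection_def by (auto intro!: A.sm_car A.sum_car s_pow_car)

lemma projection_add:
  "a \<in> cs_carrier A \<Longrightarrow> b \<in> cs_carrier A \<Longrightarrow> eigen_projection k (a + b) = eigen_projection k a + eigen_projection k b"
  unfolding eigen_projection_def by (simp add: s_pow_add s_pow_car A.sm_add A.sm_car sum.distrib A.sum_car)

lemma projection_sm:
  "a \<in> cs_carrier A \<Longrightarrow> eigen_projection k (cs_smult A c a) = cs_smult A c (eigen_projection k a)"
  unfolding eigen_projection_def by (simp add: s_pow_sm s_pow_car A.sm_car A.sum_car A.sm_sum A.sm_comm[of _ c])

text \<open>The k-th projection lands in A_k: applying \<sigma> shifts the summation index by one, which
  is harmless because \<sigma>^m = id.\<close>

lemma projection_eig: "a \<in> cs_carrier A \<Longrightarrow> eigen_projection k a \<in> eig (int k)"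
proof (rule eigI)
  assume a: "a \<in> cs_carrier A"
  show "eigen_projection k a \<in> cs_carrier A" by (rule projection_car[OF a])
  define h where "h l = cs_smult A (inverse \<zeta> ^ (k * l)) ((\<sigma> ^^ l) a)" for l
  have hc: "h l \<in> cs_carrier A" for l unfolding h_def by (simp add: A.sm_car s_pow_car a)
  have sigma_h: "\<sigma> (h l) = cs_smult A (\<zeta> ^ k) (h (Suc l))" for l
  proof -
    have "\<zeta> ^ k * inverse \<zeta> ^ (k * Suc l) = inverse \<zeta> ^ (k * l)"
      using zeta_nonzero by (simp add: power_add power_mult_distrib[symmetric] field_simps)
    then show ?thesis unfolding h_def
      using A.sm_mult[OF s_car[OF s_pow_car[OF a]], of "\<zeta> ^ k" "inverse \<zeta> ^ (k * Suc l)", symmetric]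
      by (simp add: s_sm s_pow_car a)
  qed
  have "h m = h 0" unfolding h_def
    by (simp add: sigma_period a power_mult power_inverse zeta_root mult.commute[of k])
  then have shift: "(\<Sum>l<m. h (Suc l)) = (\<Sum>l<m. h l)"
    using sum.lessThan_Suc_shift[of h m] by (simp add: add.commute)
  have "\<sigma> (eigen_projection k a) = cs_smult A (inverse (of_nat m)) (\<Sum>l<m. \<sigma> (h l))"
    unfolding eigen_projection_def h_def[symmetric] by (simp add: s_sm A.sum_car hc s_sum)
  also have "\<dots> = cs_smult A (inverse (of_nat m)) (cs_smult A (\<zeta> ^ k) (\<Sum>l<m. h (Suc l)))"
    by (simp add: sigma_h A.sm_sum hc)
  also have "\<dots> = cs_smult A (\<zeta> powi int k) (eigen_projection k a)"
    unfolding eigen_projection_def h_def[symmetric] shift by (simp add: A.sm_comm A.sum_car hc)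
  finally show "\<sigma> (eigen_projection k a) = cs_smult A (\<zeta> powi int k) (eigen_projection k a)" .
qed

text \<open>On an eigenvector of A_i the k-th projection is the identity if i \<equiv> k (mod m) and zero
  otherwise (orthogonality of characters of Z/mZ).\<close>

lemma projection_eigenvector:
  assumes x: "x \<in> eig i"
  shows "eigen_projection k x = (if int m dvd (i - int k) then x else 0)"
proof -
  define w where "w = \<zeta> powi (i - int k)"
  have xc: "x \<in> cs_carrier A" using eig_car[OF x] .
  have "inverse \<zeta> ^ k * \<zeta> powi i = w"
    unfolding w_def using zeta_nonzero by (simp add: power_int_diff power_inverse field_simps)
  then have wl: "inverse \<zeta> ^ (k * l) * (\<zeta> powi i) ^ l = w ^ l" for l
    by (metis power_mult mult.commute power_mult_distrib)
  have "eigen_projection k x = cs_smult A (inverse (of_nat m)) (\<Sum>l<m. cs_smult A (w ^ l) x)"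
    unfolding eigen_projection_def
    by (rule arg_cong[where f="cs_smult A _"], rule sum.cong)
       (simp_all add: s_pow_eig[OF x] A.sm_mult[symmetric] xc wl)
  also have "\<dots> = cs_smult A (inverse (of_nat m) * (\<Sum>l<m. w ^ l)) x"
    by (simp add: A.sm_rsum[OF xc, symmetric] A.sm_mult xc)
  finally have proj: "eigen_projection k x = cs_smult A (inverse (of_nat m) * (\<Sum>l<m. w ^ l)) x" .
  have w_one: "w = 1 \<longleftrightarrow> int m dvd (i - int k)"
    unfolding w_def by (rule primitive_root_powi_one[OF zeta_root m_pos zeta_primitive])
  show ?thesis
  proof (cases "int m dvd (i - int k)")
    case True
    then show ?thesis using proj w_one m_pos by (simp add: A.sm_one xc)
  next
    case False
    have "w ^ m = 1" unfolding w_def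
      by (metis power_int_of_nat power_int_mult mult.commute zeta_root power_int_1_left)
    then have "(\<Sum>l<m. w ^ l) = 0" using root_of_unity_geometric_sum w_one False by blast
    then show ?thesis using False proj by (simp add: A.sm_rzero xc)
  qed
qed

lemma sum_projections: "a \<in> cs_carrier A \<Longrightarrow> (\<Sum>k<m. eigen_projection k a) = a"
proof -
  assume a: "a \<in> cs_carrier A"
  have inner: "(\<Sum>k<m. inverse \<zeta> ^ (k * l)) = (if l = 0 then of_nat m else 0)" if "l < m" for l
  proof (cases "l = 0")
    case False
    have "inverse \<zeta> ^ l \<noteq> 1"
      using zeta_primitive False that by (simp add: power_inverse)
    moreover have "(inverse \<zeta> ^ l) ^ m = 1"
      by (metis power_mult mult.commute power_inverse zeta_root inverse_1 power_one)
    ultimately have "(\<Sum>k<m. (inverse \<zeta> ^ l) ^ k) = 0" using root_of_unity_geometric_sum by blast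
    then show ?thesis using False by (simp add: power_mult mult.commute[of _ l])
  qed simp
  have "(\<Sum>k<m. eigen_projection k a) = cs_smult A (inverse (of_nat m))
      (\<Sum>k<m. \<Sum>l<m. cs_smult A (inverse \<zeta> ^ (k * l)) ((\<sigma> ^^ l) a))"
    unfolding eigen_projection_def by (simp add: A.sm_sum A.sm_car A.sum_car s_pow_car a)
  also have "(\<Sum>k<m. \<Sum>l<m. cs_smult A (inverse \<zeta> ^ (k * l)) ((\<sigma> ^^ l) a))
      = (\<Sum>l<m. cs_smult A (\<Sum>k<m. inverse \<zeta> ^ (k * l)) ((\<sigma> ^^ l) a))"
    by (subst sum.swap) (simp add: A.sm_rsum s_pow_car a)
  also have "\<dots> = (\<Sum>l<m. cs_smult A (if l = 0 then of_nat m else 0) ((\<sigma> ^^ l) a))"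
    by (rule sum.cong) (simp_all add: inner)
  also have "\<dots> = cs_smult A (of_nat m) a"
    by (subst sum_lessThan_only_zero) (use m_pos in \<open>auto simp: A.sm_rzero s_pow_car a\<close>)
  finally show ?thesis using m_pos by (simp add: A.sm_mult[symmetric] a A.sm_one)
qed

end

section \<open>The twisted loop algebra\<close>

text \<open>Inside B = A \<otimes>_k S_m, the twisted loop algebra L = \<Sum>_i A_i \<otimes> t^(i/m) is an
  R-conformal superalgebra: it is a k-subspace stable under multiplication by R = k[t^(\<plusminus>1)]
  (which shifts exponents by multiples of m), under the derivation and under n-products.\<close>

locale twisted_loop = finite_order_automorphism A \<sigma> m \<zeta>
  for A :: "('k::field_char_0, 'a::ab_group_add) csa" and \<sigma> m \<zeta> +
  fixes B :: "(int \<Rightarrow>\<^sub>0 'k, 'b::ab_group_add) csa" and \<beta>B :: "'a \<Rightarrow> (int \<Rightarrow>\<^sub>0 'k) \<Rightarrow> 'b"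
  assumes B_bc: "is_base_change kring (Sring m) const_laurent A B \<beta>B"
begin

sublocale BB: base_change kring "Sring m" const_laurent A B \<beta>B by (rule base_change.intro, rule B_bc)

abbreviation "L \<equiv> loop_algebra m A \<sigma> \<zeta> B \<beta>B"
abbreviation "LC \<equiv> loop_carrier A \<sigma> \<zeta> \<beta>B"
text \<open>tt i is the monomial t^(i/m) of S_m.\<close>

abbreviation "tt i \<equiv> Poly_Mapping.single i (1::'k)"

lemma Sring_simps[simp]: "dr_emb (Sring m) c = Poly_Mapping.single 0 c" "dr_delta (Sring m) = puiseux_deriv m"
  by (simp_all add: Sring_def)

lemma const_laurent_eq[simp]: "const_laurent c = Poly_Mapping.single 0 c"
  by (simp add: const_laurent_def)

lemma L_simps[simp]: "cs_carrier L = LC" "cs_even L = LC \<inter> cs_even B" "cs_odd L = LC \<inter> cs_odd B"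
  "cs_smult L r x = cs_smult B (incl_RS m r) x" "cs_der L = cs_der B" "cs_nprod L = cs_nprod B"
  by (simp_all add: loop_algebra_def)

lemma LC_iff: "v \<in> LC \<longleftrightarrow> (\<exists>I x. finite I \<and> (\<forall>i\<in>I. x i \<in> eig i) \<and> v = (\<Sum>i\<in>I. \<beta>B (x i) (tt i)))"
  unfolding loop_carrier_def by blast

lemma bB_zero: "\<beta>B 0 s = 0"
  by (rule BB.b_zero1[OF A.module_closed])

lemma lc_B: "v \<in> LC \<Longrightarrow> v \<in> cs_carrier B"
  unfolding LC_iff by (auto intro!: BB.sum_b_car eig_car)

lemma lc_elem: "x \<in> eig i \<Longrightarrow> \<beta>B x (tt i) \<in> LC"
  unfolding LC_iff by (intro exI[of _ "{i}"] exI[of _ "\<lambda>_. x"]) auto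

lemma lc_zero: "0 \<in> LC"
  unfolding LC_iff by (intro exI[of _ "{}"]) auto

lemma lc_add: assumes "v1 \<in> LC" "v2 \<in> LC" shows "v1 + v2 \<in> LC"
proof -
  obtain I x where I: "finite I" "\<forall>i\<in>I. x i \<in> eig i" "v1 = (\<Sum>i\<in>I. \<beta>B (x i) (tt i))"
    using assms(1) unfolding LC_iff by blast
  obtain J y where J: "finite J" "\<forall>i\<in>J. y i \<in> eig i" "v2 = (\<Sum>i\<in>J. \<beta>B (y i) (tt i))"
    using assms(2) unfolding LC_iff by blast
  define x' where "x' i = (if i \<in> I then x i else 0)" for i
  define y' where "y' i = (if i \<in> J then y i else 0)" for i
  have x'e: "x' i \<in> eig i" and y'e: "y' i \<in> eig i" for i
    unfolding x'_def y'_def using I J eig_zero by auto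
  have "v1 = (\<Sum>i\<in>I \<union> J. \<beta>B (x' i) (tt i))"
    unfolding I(3) by (rule sum.mono_neutral_cong_left) (auto simp: I J x'_def bB_zero)
  moreover have "v2 = (\<Sum>i\<in>I \<union> J. \<beta>B (y' i) (tt i))"
    unfolding J(3) by (rule sum.mono_neutral_cong_left) (auto simp: I J y'_def bB_zero)
  moreover have "\<beta>B (x' i + y' i) (tt i) = \<beta>B (x' i) (tt i) + \<beta>B (y' i) (tt i)" for i
    using BB.b_add1 eig_car x'e y'e by blast
  ultimately have "v1 + v2 = (\<Sum>i\<in>I \<union> J. \<beta>B (x' i + y' i) (tt i))"
    by (simp add: sum.distrib)
  then show ?thesis unfolding LC_iff using I J x'e y'e eig_add
    by (intro exI[of _ "I \<union> J"] exI[of _ "\<lambda>i. x' i + y' i"]) auto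
qed

lemma lc_sum: "(\<And>i. i \<in> I \<Longrightarrow> g i \<in> LC) \<Longrightarrow> sum g I \<in> LC"
  by (induction I rule: infinite_finite_induct) (auto simp: lc_zero lc_add)

lemma lc_monomial: assumes "x \<in> eig i" "int m dvd (p - i)" shows "\<beta>B x (Poly_Mapping.single p c) \<in> LC"
proof -
  obtain j where "p - i = int m * j" using assms(2) by (auto elim: dvdE)
  then have p: "p = i + int m * j" by simp
  have "Poly_Mapping.single p c = const_laurent c * tt p"
    by (simp add: mult_single)
  then have "\<beta>B x (Poly_Mapping.single p c) = \<beta>B (cs_smult A c x) (tt p)"
    by (simp add: BB.b_bal eig_car[OF assms(1)])
  then show ?thesis using lc_elem eig_shift eig_sm assms(1) p by metis
qed

lemma lc_sm: assumes "v \<in> LC" shows "cs_smult B (incl_RS m r) v \<in> LC"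
proof -
  obtain I x where I: "finite I" "\<forall>i\<in>I. x i \<in> eig i" "v = (\<Sum>i\<in>I. \<beta>B (x i) (tt i))"
    using assms unfolding LC_iff by blast
  have Ic: "\<forall>i\<in>I. x i \<in> cs_carrier A" using I eig_car by blast
  have ir: "incl_RS m r * tt i = (\<Sum>j\<in>Poly_Mapping.keys r.
      Poly_Mapping.single (i + int m * j) (Poly_Mapping.lookup r j))" for i
    unfolding incl_RS_def by (simp add: sum_distrib_right mult_single add.commute)
  have "cs_smult B (incl_RS m r) v = (\<Sum>i\<in>I. \<Sum>j\<in>Poly_Mapping.keys r.
      \<beta>B (x i) (Poly_Mapping.single (i + int m * j) (Poly_Mapping.lookup r j)))"
    using I(3) Ic by (simp add: BB.T.sm_sum BB.b_car BB.b_sm ir BB.b_sum2)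
  then show ?thesis using I by (auto intro!: lc_sum lc_monomial)
qed

lemma L_module_closed: "module_closed L"
  unfolding module_closed_def by (simp add: lc_zero lc_add lc_sm)

text \<open>The derivation of x \<otimes> t^(i/m) is \<partial>x \<otimes> t^(i/m) + (i/m) x \<otimes> t^((i-m)/m).\<close>

lemma lc_der: assumes "v \<in> LC" shows "cs_der B v \<in> LC"
proof -
  obtain I x where I: "finite I" "\<forall>i\<in>I. x i \<in> eig i" "v = (\<Sum>i\<in>I. \<beta>B (x i) (tt i))"
    using assms unfolding LC_iff by blast
  have Ic: "\<forall>i\<in>I. x i \<in> cs_carrier A" using I eig_car by blast
  have "cs_der B v = (\<Sum>i\<in>I. \<beta>B (cs_der A (x i)) (tt i)
      + \<beta>B (x i) (Poly_Mapping.single (i - int m) (of_int i / of_nat m)))"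
    using I(3) Ic by (simp add: BB.T.der_sum BB.b_car BB.b_der puiseux_deriv_single)
  moreover have "\<beta>B (cs_der A (x i)) (tt i)
      + \<beta>B (x i) (Poly_Mapping.single (i - int m) (of_int i / of_nat m)) \<in> LC" if "i \<in> I" for i
    using I(2) that by (intro lc_add lc_elem eig_der lc_monomial) auto
  ultimately show ?thesis by (simp add: lc_sum)
qed

text \<open>The n-product of x \<otimes> t^(i/m) and y \<otimes> t^(j/m) is a combination of
  x_(n+l) y \<otimes> t^((i+j)/m - l), and x_(n+l) y lies in A_(i+j).\<close>

lemma lc_np_pure: assumes "x \<in> eig i" "y \<in> eig j"
  shows "cs_nprod B n (\<beta>B x (tt i)) (\<beta>B y (tt j)) \<in> LC"
proof -
  have xc: "x \<in> cs_carrier A" and yc: "y \<in> cs_carrier A" using assms eig_car by auto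
  obtain N where "\<forall>n\<ge>N. cs_nprod A n x y = 0" using A.np_vanish[OF xc yc] by blast
  then have N: "\<forall>l\<ge>N. cs_nprod A (n + l) x y = 0" by auto
  have term_in: "\<beta>B (cs_nprod A (n + l) x y)
       (Poly_Mapping.single 0 (inverse (of_nat (fact l))) * (puiseux_deriv m ^^ l) (tt i) * tt j) \<in> LC" for l
  proof -
    obtain c' where c': "(puiseux_deriv m ^^ l) (tt i) = Poly_Mapping.single (i - int l * int m) c'"
      using puiseux_deriv_pow_single by blast
    show ?thesis unfolding c'
      by (simp add: mult_single, rule lc_monomial[OF eig_np[OF assms]]) (simp add: algebra_simps)
  qed
  show ?thesis unfolding BB.b_np[OF xc yc N] Sring_simps by (rule lc_sum, rule term_in)
qed

lemma lc_np: assumes "v1 \<in> LC" "v2 \<in> LC" shows "cs_nprod B n v1 v2 \<in> LC"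
proof -
  obtain I x where I: "finite I" "\<forall>i\<in>I. x i \<in> eig i" "v1 = (\<Sum>i\<in>I. \<beta>B (x i) (tt i))"
    using assms(1) unfolding LC_iff by blast
  obtain J y where J: "finite J" "\<forall>i\<in>J. y i \<in> eig i" "v2 = (\<Sum>i\<in>J. \<beta>B (y i) (tt i))"
    using assms(2) unfolding LC_iff by blast
  have "\<forall>i\<in>I. x i \<in> cs_carrier A" "\<forall>i\<in>J. y i \<in> cs_carrier A" using I J eig_car by blast+
  then have "cs_nprod B n v1 v2 = (\<Sum>i\<in>I. \<Sum>j\<in>J. cs_nprod B n (\<beta>B (x i) (tt i)) (\<beta>B (y j) (tt j)))"
    using I(3) J(3) by (simp add: BB.T.np_sum1 BB.T.np_sum2 BB.b_car BB.sum_b_car sum.swap[of _ J])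
  then show ?thesis using I J by (auto intro!: lc_sum lc_np_pure)
qed

end

locale loop_form = twisted_loop A \<sigma> m \<zeta> B \<beta>B
  for A :: "('k::field_char_0, 'a::ab_group_add) csa" and \<sigma> m \<zeta>
    and B :: "(int \<Rightarrow>\<^sub>0 'k, 'b::ab_group_add) csa" and \<beta>B +
  fixes C :: "(int \<Rightarrow>\<^sub>0 'k, 'c::ab_group_add) csa" and \<beta>C :: "'a \<Rightarrow> (int \<Rightarrow>\<^sub>0 'k) \<Rightarrow> 'c"
    and D :: "(int \<Rightarrow>\<^sub>0 'k, 'd::ab_group_add) csa" and \<beta>D :: "'c \<Rightarrow> (int \<Rightarrow>\<^sub>0 'k) \<Rightarrow> 'd"
    and E :: "(int \<Rightarrow>\<^sub>0 'k, 'e::ab_group_add) csa" and \<beta>E :: "'b \<Rightarrow> (int \<Rightarrow>\<^sub>0 'k) \<Rightarrow> 'e"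
  assumes C_bc: "is_base_change kring Rring const_laurent A C \<beta>C"
    and D_bc: "is_base_change Rring (Sring m) (incl_RS m) C D \<beta>D"
    and E_bc: "is_base_change Rring (Sring m) (incl_RS m) L E \<beta>E"
begin

sublocale CC: base_change kring Rring const_laurent A C \<beta>C by (rule base_change.intro, rule C_bc)
sublocale DD: base_change Rring "Sring m" "incl_RS m" C D \<beta>D by (rule base_change.intro, rule D_bc)
sublocale EE: base_change Rring "Sring m" "incl_RS m" L E \<beta>E by (rule base_change.intro, rule E_bc)

lemma Rring_emb[simp]: "dr_emb Rring c = Poly_Mapping.single 0 c"
  by (simp add: Rring_def)

lemma incl_facts: "incl_RS m (1 :: int \<Rightarrow>\<^sub>0 'k) = 1"
  "incl_RS m ((x :: int \<Rightarrow>\<^sub>0 'k) + y) = incl_RS m x + incl_RS m y"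
  "incl_RS m ((x :: int \<Rightarrow>\<^sub>0 'k) * y) = incl_RS m x * incl_RS m y"
  "incl_RS m (dr_delta Rring (r :: int \<Rightarrow>\<^sub>0 'k)) = puiseux_deriv m (incl_RS m r)"
  using DD.ext unfolding dring_ext_def by auto

lemma incl_const[simp]: "incl_RS m (Poly_Mapping.single 0 c) = Poly_Mapping.single 0 (c::'k)"
  by (simp add: incl_single)

lemma Sring_diff_kring: "diff_kring (Sring m :: ('k, int \<Rightarrow>\<^sub>0 'k) dring)"
  using DD.ext unfolding dring_ext_def by auto

text \<open>a \<mapsto> a \<otimes> 1 respects n-products, because all derivatives of 1 vanish.\<close>

lemma unit_tensor_np:
  assumes ab: "a \<in> cs_carrier A" "b \<in> cs_carrier A"
  shows "\<beta>B (cs_nprod A n a b) 1 = cs_nprod B n (\<beta>B a 1) (\<beta>B b 1)"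
proof -
  obtain N where "\<forall>n\<ge>N. cs_nprod A n a b = 0" using A.np_vanish[OF ab] by blast
  then have N: "\<forall>j\<ge>Suc N. cs_nprod A (n + j) a b = 0" by auto
  have "cs_nprod B n (\<beta>B a 1) (\<beta>B b 1) = (\<Sum>j<Suc N. \<beta>B (cs_nprod A (n + j) a b)
      (dr_emb (Sring m) (inverse (of_nat (fact j))) * (dr_delta (Sring m) ^^ j) 1 * 1))"
    by (rule BB.b_np[OF ab N])
  also have "\<dots> = \<beta>B (cs_nprod A n a b) 1"
    by (subst sum_lessThan_only_zero)
      (simp_all add: diff_kring_deltapow_one[OF Sring_diff_kring] BB.b_zero2 A.np_car ab
        diff_kring_facts(1)[OF Sring_diff_kring] del: Sring_simps)
  finally show ?thesis by (rule sym)
qed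

text \<open>C = A \<otimes>_k R \<rightarrow> B, a \<otimes> r \<mapsto> a \<otimes> r: the base change of a \<mapsto> a \<otimes> 1 along R \<subseteq> S_m.\<close>

sublocale C_to_B: base_change_hom kring Rring const_laurent A C \<beta>C "Sring m" B "incl_RS m" "\<lambda>a. \<beta>B a 1"
proof unfold_locales
  show "conformal_superalgebra (Sring m) B" by (rule BB.T_csa)
  fix a b n assume ab: "a \<in> cs_carrier A" "b \<in> cs_carrier A"
  then show "\<beta>B (cs_nprod A n a b) 1 = cs_nprod B n (\<beta>B a 1) (\<beta>B b 1)"
    by (rule unit_tensor_np)
qed (auto simp: A.module_closed A.der_car A.np_car A.np_vanish A.even_car A.odd_car incl_facts
    BB.b_car BB.b_add1 BB.b_bal BB.b_sm BB.b_der BB.b_zero2 puiseux_deriv_one BB.b_even BB.b_odd)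

text \<open>D = C \<otimes>_R S_m \<rightarrow> B, (a \<otimes> r) \<otimes> s \<mapsto> a \<otimes> r s: the base change of C \<rightarrow> B.\<close>

sublocale D_to_B: base_change_hom Rring "Sring m" "incl_RS m" C D \<beta>D "Sring m" B id C_to_B.bc_map
  by unfold_locales
    (simp_all add: BB.T_csa CC.T.module_closed CC.T.der_car CC.T.np_car CC.T.np_vanish CC.T.even_car
      CC.T.odd_car C_to_B.bc_map_car C_to_B.bc_map_even C_to_B.bc_map_odd C_to_B.bc_map_add
      C_to_B.bc_map_sm C_to_B.bc_map_der C_to_B.bc_map_np)

definition D_inverse :: "'b \<Rightarrow> 'd" where
  "D_inverse = BB.tensor_lift (\<lambda>a s. \<beta>D (\<beta>C a 1) s)"

lemma D_inverse_balanced: "balanced_map A const_laurent (\<lambda>a s. \<beta>D (\<beta>C a 1) s)"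
  unfolding balanced_map_def right_additive_def
proof (intro conjI ballI allI)
  fix a s s' assume a: "a \<in> cs_carrier A"
  show "\<beta>D (\<beta>C a 1) (s + s') = \<beta>D (\<beta>C a 1) s + \<beta>D (\<beta>C a 1) s'"
    by (rule DD.b_add2, rule CC.b_car[OF a])
next
  fix a a' s assume a: "a \<in> cs_carrier A" "a' \<in> cs_carrier A"
  show "\<beta>D (\<beta>C (a + a') 1) s = \<beta>D (\<beta>C a 1) s + \<beta>D (\<beta>C a' 1) s"
    by (simp add: CC.b_add1 a DD.b_add1 CC.b_car)
next
  fix a r s assume a: "a \<in> cs_carrier A"
  have "\<beta>C (cs_smult A r a) 1 = cs_smult C (Poly_Mapping.single 0 r) (\<beta>C a 1)"
    by (simp add: CC.b_bal a CC.b_sm)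
  then show "\<beta>D (\<beta>C (cs_smult A r a) 1) s = \<beta>D (\<beta>C a 1) (const_laurent r * s)"
    by (simp add: DD.b_bal CC.b_car a)
qed

lemma D_inverse_sum: assumes "finite I" "\<And>i. i \<in> I \<Longrightarrow> a i \<in> cs_carrier A"
  shows "D_inverse (\<Sum>i\<in>I. \<beta>B (a i) (s i)) = (\<Sum>i\<in>I. \<beta>D (\<beta>C (a i) 1) (s i))"
  unfolding D_inverse_def by (rule BB.tensor_lift_sum[OF A.module_closed D_inverse_balanced assms])

lemma D_inverse_pure:
  assumes c: "c \<in> cs_carrier C"
  shows "D_inverse (D_to_B.bc_map (\<beta>D c s)) = \<beta>D c s"
proof -
  obtain I :: "('a \<times> (int \<Rightarrow>\<^sub>0 'k)) set" and a r
    where I: "finite I" "\<forall>i\<in>I. a i \<in> cs_carrier A" "c = (\<Sum>i\<in>I. \<beta>C (a i) (r i))"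
    using CC.pure_tensor_sum_car[OF c] by blast
  have "D_to_B.bc_map (\<beta>D c s) = cs_smult B s (C_to_B.bc_map c)"
    by (simp add: D_to_B.bc_map_pure c)
  also have "\<dots> = (\<Sum>i\<in>I. \<beta>B (a i) (s * (incl_RS m (r i) * 1)))"
    using I by (simp add: C_to_B.bc_map_sum BB.b_sm BB.T.sm_sum BB.b_car)
  finally have "D_inverse (D_to_B.bc_map (\<beta>D c s))
      = (\<Sum>i\<in>I. \<beta>D (\<beta>C (a i) 1) (s * (incl_RS m (r i) * 1)))"
    using I by (simp add: D_inverse_sum)
  also have "\<dots> = (\<Sum>i\<in>I. \<beta>D (\<beta>C (a i) (r i)) s)"
  proof (rule sum.cong)
    fix i assume i: "i \<in> I"
    have "\<beta>C (a i) (r i) = cs_smult C (r i) (\<beta>C (a i) 1)" using I(2) i by (simp add: CC.b_sm)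
    then show "\<beta>D (\<beta>C (a i) 1) (s * (incl_RS m (r i) * 1)) = \<beta>D (\<beta>C (a i) (r i)) s"
      using I(2) i by (simp add: DD.b_bal CC.b_car mult.commute)
  qed simp
  also have "\<dots> = \<beta>D c s" using I by (simp add: DD.b_sum1[OF CC.T.module_closed] CC.b_car)
  finally show ?thesis .
qed

lemma D_iso: "csa_iso D B D_to_B.bc_map"
proof (rule iso_from_left_inverse[of _ _ _ D_inverse])
  show "csa_hom D B D_to_B.bc_map"
    by (rule base_change_hom_is_hom, rule D_to_B.base_change_hom_axioms)
next
  fix y assume "y \<in> cs_carrier D"
  then obtain I :: "('c \<times> (int \<Rightarrow>\<^sub>0 'k)) set" and c s
    where I: "finite I" "\<forall>i\<in>I. c i \<in> cs_carrier C" "y = (\<Sum>i\<in>I. \<beta>D (c i) (s i))"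
    using DD.pure_tensor_sum_car by blast
  then show "D_inverse (D_to_B.bc_map y) = y"
    unfolding D_inverse_def
    by (simp add: D_to_B.bc_map_sum_car DD.b_car BB.tensor_lift_sum_car[OF A.module_closed D_inverse_balanced]
        D_to_B.bc_map_car D_inverse_pure[unfolded D_inverse_def])
next
  fix y assume "y \<in> cs_carrier B"
  then obtain I :: "('a \<times> (int \<Rightarrow>\<^sub>0 'k)) set" and a s
    where I: "finite I" "\<forall>i\<in>I. a i \<in> cs_carrier A" "y = (\<Sum>i\<in>I. \<beta>B (a i) (s i))"
    using BB.pure_tensor_sum_car by blast
  let ?x = "\<Sum>i\<in>I. \<beta>D (\<beta>C (a i) 1) (s i)"
  have "?x \<in> cs_carrier D" using I by (simp add: DD.sum_b_car CC.b_car)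
  moreover have "D_to_B.bc_map ?x = y"
    using I by (simp add: D_to_B.bc_map_sum CC.b_car C_to_B.bc_map_pure incl_facts(1) BB.b_sm)
  ultimately show "\<exists>x\<in>cs_carrier D. D_to_B.bc_map x = y" by blast
qed

text \<open>E = L \<otimes>_R S_m \<rightarrow> B, v \<otimes> s \<mapsto> s v: the base change of the inclusion L \<subseteq> B.\<close>

sublocale E_to_B: base_change_hom Rring "Sring m" "incl_RS m" L E \<beta>E "Sring m" B id id
  by unfold_locales (simp_all add: BB.T_csa L_module_closed lc_der lc_np BB.T.np_vanish lc_B)

definition E_inverse_gen :: "'a \<Rightarrow> (int \<Rightarrow>\<^sub>0 'k) \<Rightarrow> 'e" where
  "E_inverse_gen a s = (\<Sum>k<m. \<beta>E (\<beta>B (eigen_projection k a) (tt (int k))) (tt (- int k) * s))"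

definition E_inverse :: "'b \<Rightarrow> 'e" where
  "E_inverse = BB.tensor_lift E_inverse_gen"

lemma projection_in_loop: "a \<in> cs_carrier A \<Longrightarrow> \<beta>B (eigen_projection k a) (tt (int k)) \<in> LC"
  by (rule lc_elem, rule projection_eig)

lemma E_inverse_balanced: "balanced_map A const_laurent E_inverse_gen"
  unfolding balanced_map_def right_additive_def
proof (intro conjI ballI allI)
  fix a s s' assume a: "a \<in> cs_carrier A"
  show "E_inverse_gen a (s + s') = E_inverse_gen a s + E_inverse_gen a s'"
    unfolding E_inverse_gen_def using a by (simp add: distrib_left EE.b_add2 projection_in_loop sum.distrib)
next
  fix a a' s assume a: "a \<in> cs_carrier A" "a' \<in> cs_carrier A"
  show "E_inverse_gen (a + a') s = E_inverse_gen a s + E_inverse_gen a' s"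
    unfolding E_inverse_gen_def using a
    by (simp add: projection_add BB.b_add1 projection_car EE.b_add1[simplified] projection_in_loop sum.distrib)
next
  fix a r s assume a: "a \<in> cs_carrier A"
  have "\<beta>E (\<beta>B (eigen_projection k (cs_smult A r a)) (tt (int k))) u
      = \<beta>E (\<beta>B (eigen_projection k a) (tt (int k))) (Poly_Mapping.single 0 r * u)" for k u
  proof -
    have "\<beta>B (eigen_projection k (cs_smult A r a)) (tt (int k))
        = cs_smult B (incl_RS m (Poly_Mapping.single 0 r)) (\<beta>B (eigen_projection k a) (tt (int k)))"
      using a by (simp add: projection_sm BB.b_bal projection_car BB.b_sm)
    then show ?thesis
      using EE.b_bal[of "\<beta>B (eigen_projection k a) (tt (int k))" "Poly_Mapping.single 0 r" u]
        projection_in_loop[OF a] by simp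
  qed
  then show "E_inverse_gen (cs_smult A r a) s = E_inverse_gen a (const_laurent r * s)"
    unfolding E_inverse_gen_def by (simp add: mult.left_commute)
qed

lemma E_inverse_sum: assumes "finite I" "\<And>i. i \<in> I \<Longrightarrow> a i \<in> cs_carrier A"
  shows "E_inverse (\<Sum>i\<in>I. \<beta>B (a i) (s i)) = (\<Sum>i\<in>I. E_inverse_gen (a i) (s i))"
  unfolding E_inverse_def by (rule BB.tensor_lift_sum[OF A.module_closed E_inverse_balanced assms])

text \<open>On x \<otimes> s t^(i/m) with x \<in> A_i only the projection with k \<equiv> i (mod m) survives, and
  the powers of t^(1/m) recombine, leaving (x \<otimes> t^(i/m)) \<otimes> s.\<close>

lemma E_inverse_gen_eig:
  assumes x: "x \<in> eig i"
  shows "E_inverse_gen x (s * tt i) = \<beta>E (\<beta>B x (tt i)) s"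
proof -
  define k0 where "k0 = nat (i mod int m)"
  define q where "q = i div int m"
  have k0m: "k0 < m" unfolding k0_def using m_pos by (simp add: nat_less_iff)
  have ik: "i = int k0 + int m * q" unfolding k0_def q_def using m_pos by (simp add: mult.commute)
  have bE_zero: "\<beta>E 0 u = 0" for u using EE.b_zero1[OF L_module_closed] by simp
  have other: "\<beta>E (\<beta>B (eigen_projection k x) (tt (int k))) (tt (- int k) * (s * tt i)) = 0"
    if "k < m" "k \<noteq> k0" for k
  proof -
    have "\<not> int m dvd (i - int k)"
    proof
      assume "int m dvd (i - int k)"
      then have "i mod int m = int k mod int m" by (simp add: mod_eq_dvd_iff)
      then have "i mod int m = int k" using that by simp
      then show False using that unfolding k0_def by simp
    qed
    then show ?thesis by (simp add: projection_eigenvector[OF x] bB_zero bE_zero)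
  qed
  have "E_inverse_gen x (s * tt i)
      = \<beta>E (\<beta>B (eigen_projection k0 x) (tt (int k0))) (tt (- int k0) * (s * tt i))"
    unfolding E_inverse_gen_def
    by (rule sum.mono_neutral_right[where S="{k0}", simplified]) (auto simp: k0m other)
  also have "eigen_projection k0 x = x" using projection_eigenvector[OF x, of k0] ik by simp
  also have "tt (- int k0) * (s * tt i) = incl_RS m (tt q) * s"
    by (simp add: incl_single mult_single ik mult.commute mult.left_commute)
  also have "\<beta>E (\<beta>B x (tt (int k0))) (incl_RS m (tt q) * s)
      = \<beta>E (cs_smult B (incl_RS m (tt q)) (\<beta>B x (tt (int k0)))) s"
    using EE.b_bal[of "\<beta>B x (tt (int k0))" "tt q" s] lc_elem[OF eig_shift[OF x, of "- q", unfolded ik]]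
    by (simp add: algebra_simps)
  also have "cs_smult B (incl_RS m (tt q)) (\<beta>B x (tt (int k0))) = \<beta>B x (tt i)"
    using eig_car[OF x] by (simp add: BB.b_sm incl_single mult_single ik add.commute)
  finally show ?thesis .
qed

lemma E_inverse_pure:
  assumes v: "v \<in> LC"
  shows "E_inverse (E_to_B.bc_map (\<beta>E v s)) = \<beta>E v s"
proof -
  obtain I x where I: "finite I" "\<forall>i\<in>I. x i \<in> eig i" "v = (\<Sum>i\<in>I. \<beta>B (x i) (tt i))"
    using v unfolding LC_iff by blast
  have Ic: "\<forall>i\<in>I. x i \<in> cs_carrier A" using I eig_car by blast
  have "E_to_B.bc_map (\<beta>E v s) = cs_smult B s v" using v by (simp add: E_to_B.bc_map_pure)
  also have "\<dots> = (\<Sum>i\<in>I. \<beta>B (x i) (s * tt i))"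
    using I(3) Ic by (simp add: BB.T.sm_sum BB.b_car BB.b_sm)
  finally have "E_inverse (E_to_B.bc_map (\<beta>E v s)) = (\<Sum>i\<in>I. E_inverse_gen (x i) (s * tt i))"
    using I(1) Ic by (simp add: E_inverse_sum)
  also have "\<dots> = (\<Sum>i\<in>I. \<beta>E (\<beta>B (x i) (tt i)) s)"
    using I(2) by (simp add: E_inverse_gen_eig)
  also have "\<dots> = \<beta>E v s"
    using I(2,3) EE.b_sum1[OF L_module_closed, of I "\<lambda>i. \<beta>B (x i) (tt i)" s] lc_elem by simp
  finally show ?thesis .
qed

text \<open>Surjectivity onto pure tensors: a = \<Sum>_k \<pi>_k a, and t^(k/m) t^(-k/m) = 1.\<close>

lemma E_to_B_hits_pure:
  assumes a: "a \<in> cs_carrier A"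
  shows "\<exists>x\<in>cs_carrier E. E_to_B.bc_map x = \<beta>B a s"
proof -
  let ?x = "\<Sum>k<m. \<beta>E (\<beta>B (eigen_projection k a) (tt (int k))) (tt (- int k) * s)"
  have tt_cancel: "tt (- j) * (s * tt j) = s" for j
    by (simp add: mult.commute mult.left_commute mult_single)
  have x_car: "?x \<in> cs_carrier E" using a by (intro EE.T.sum_car EE.b_car) (simp add: projection_in_loop)
  have "E_to_B.bc_map ?x = (\<Sum>k<m. \<beta>B (eigen_projection k a) s)"
    using a by (simp add: E_to_B.bc_map_sum_car EE.b_car projection_in_loop E_to_B.bc_map_pure BB.b_sm
        projection_car mult.assoc tt_cancel)
  also have "\<dots> = \<beta>B a s"
    using a by (simp add: BB.b_sum1[OF A.module_closed, symmetric] projection_car sum_projections)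
  finally show ?thesis using x_car by blast
qed

lemma E_iso: "csa_iso E B E_to_B.bc_map"
proof (rule iso_from_left_inverse[of _ _ _ E_inverse])
  show "csa_hom E B E_to_B.bc_map"
    by (rule base_change_hom_is_hom, rule E_to_B.base_change_hom_axioms)
next
  fix y assume y: "y \<in> cs_carrier E"
  obtain I :: "('b \<times> (int \<Rightarrow>\<^sub>0 'k)) set" and c s
    where I: "finite I" "\<forall>i\<in>I. c i \<in> LC" "y = (\<Sum>i\<in>I. \<beta>E (c i) (s i))"
    using EE.pure_tensor_sum_car[OF y] by auto
  then show "E_inverse (E_to_B.bc_map y) = y"
    unfolding E_inverse_def
    by (simp add: E_to_B.bc_map_sum_car EE.b_car BB.tensor_lift_sum_car[OF A.module_closed E_inverse_balanced]
        E_to_B.bc_map_car E_inverse_pure[unfolded E_inverse_def])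
next
  fix y assume "y \<in> cs_carrier B"
  then obtain I :: "('a \<times> (int \<Rightarrow>\<^sub>0 'k)) set" and a s
    where I: "finite I" "\<forall>i\<in>I. a i \<in> cs_carrier A" "y = (\<Sum>i\<in>I. \<beta>B (a i) (s i))"
    using BB.pure_tensor_sum_car by blast
  then have "\<forall>i\<in>I. \<exists>x. x \<in> cs_carrier E \<and> E_to_B.bc_map x = \<beta>B (a i) (s i)"
    using E_to_B_hits_pure by blast
  from bchoice[OF this] obtain x
    where x: "\<forall>i\<in>I. x i \<in> cs_carrier E \<and> E_to_B.bc_map (x i) = \<beta>B (a i) (s i)"
    by blast
  have "(\<Sum>i\<in>I. x i) \<in> cs_carrier E" using x by (auto intro!: EE.T.sum_car)
  moreover have "E_to_B.bc_map (\<Sum>i\<in>I. x i) = y" using x I(3) by (simp add: E_to_B.bc_map_sum_car)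
  ultimately show "\<exists>x\<in>cs_carrier E. E_to_B.bc_map x = y" by blast
qed

theorem loop_algebra_is_form: "csa_isomorphic E D"
proof -
  have "csa_iso B D (inv_into (cs_carrier D) D_to_B.bc_map)"
    by (rule iso_inv[OF DD.T_csa BB.T_csa D_iso])
  then have "csa_iso E D (inv_into (cs_carrier D) D_to_B.bc_map \<circ> E_to_B.bc_map)"
    by (rule iso_comp[OF E_iso])
  then show ?thesis unfolding csa_isomorphic_def by blast
qed

end

text \<open>L(A, \<sigma>) is an S_m/R-form of A \<otimes>_k R.\<close>

theorem mainTheorem2:
  fixes A :: "('k::{alg_closed_field, field_char_0}, 'a::ab_group_add) csa"
    and \<sigma> :: "'a \<Rightarrow> 'a"
    and m :: nat
    and \<xi> :: "nat \<Rightarrow> 'k"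
    and B :: "(int \<Rightarrow>\<^sub>0 'k, 'b::ab_group_add) csa" and \<beta>B :: "'a \<Rightarrow> (int \<Rightarrow>\<^sub>0 'k) \<Rightarrow> 'b"
    and C :: "(int \<Rightarrow>\<^sub>0 'k, 'c::ab_group_add) csa" and \<beta>C :: "'a \<Rightarrow> (int \<Rightarrow>\<^sub>0 'k) \<Rightarrow> 'c"
    and D :: "(int \<Rightarrow>\<^sub>0 'k, 'd::ab_group_add) csa" and \<beta>D :: "'c \<Rightarrow> (int \<Rightarrow>\<^sub>0 'k) \<Rightarrow> 'd"
    and E :: "(int \<Rightarrow>\<^sub>0 'k, 'e::ab_group_add) csa" and \<beta>E :: "'b \<Rightarrow> (int \<Rightarrow>\<^sub>0 'k) \<Rightarrow> 'e"
  assumes xi_prim: "\<forall>n\<ge>1. \<xi> n ^ n = 1 \<and> (\<forall>j. 0 < j \<and> j < n \<longrightarrow> \<xi> n ^ j \<noteq> 1)"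
    and xi_compat: "\<forall>l\<ge>1. \<forall>n\<ge>1. \<xi> (l * n) ^ l = \<xi> n"
    and A_csa: "conformal_superalgebra kring A"
    and sigma_aut: "csa_iso A A \<sigma>"
    and m_pos: "m \<ge> 1"
    and sigma_period: "\<forall>x\<in>cs_carrier A. (\<sigma> ^^ m) x = x"
    and B_bc: "is_base_change kring (Sring m) const_laurent A B \<beta>B"
    and C_bc: "is_base_change kring Rring const_laurent A C \<beta>C"
    and D_bc: "is_base_change Rring (Sring m) (incl_RS m) C D \<beta>D"
    and E_bc: "is_base_change Rring (Sring m) (incl_RS m) (loop_algebra m A \<sigma> (\<xi> m) B \<beta>B) E \<beta>E"
  shows "csa_isomorphic E D"
proof -
  have "csa_hom A A \<sigma>" using sigma_aut unfolding csa_iso_def by blast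
  moreover have "\<xi> m ^ m = 1" "\<forall>j. 0 < j \<and> j < m \<longrightarrow> \<xi> m ^ j \<noteq> 1"
    using xi_prim m_pos by auto
  ultimately have "loop_form A \<sigma> m (\<xi> m) B \<beta>B C \<beta>C D \<beta>D E \<beta>E"
    using A_csa m_pos sigma_period B_bc C_bc D_bc E_bc
    by (simp add: loop_form_def loop_form_axioms_def twisted_loop_def twisted_loop_axioms_def
        finite_order_automorphism_def)
  then show ?thesis by (rule loop_form.loop_algebra_is_form)
qed

end
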